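(* Let Assumptions 1 and 2 hold and let $K<\mu<1$. There exists a constant $c_\mu>0$ such that, for every $\delta\in(0,K)$, if $x^{(0)}\in U\cap\Sigma$ satisfies $0<\|r^{(0)}\|_2\le c_\mu\delta^2$ and one runs version P of the adaptive-depth Anderson–Pulay acceleration with parameter $\delta$ (or version A when $\Sigma=\mathbb{R}^n$), then the sequences $(x^{(k)})$, $(r^{(k)})$ are well defined and, as long as $r^{(k)}\neq0$: $$m_k\le\min(k,p),\qquad \|c^{(k)}\|_\infty\le C_{m_k}\Big(1+\Big(\frac{\mu}{1-\mu}\Big)^{m_k}\Big),\qquad \|r^{(k+1)}\|_2\le\mu\|r^{(k)}\|_2,$$ where $C_{m_k}>0$ depends only on $m_k$; in particular the method is locally q-linearly convergent. Moreover, if $k-m_k\ge1$, then $\|r^{(k)}\|_2\le\delta\|r^{(k-m_k-1)}\|_2$.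
   Context: All norms $\|\cdot\|_2$ are Euclidean. Let $n,p\ge1$ be integers, $\Sigma$ a smooth submanifold of $\mathbb{R}^n$, $V\subset\mathbb{R}^n$ open, $f\in\mathscr{C}^2(V,\mathbb{R}^p)$, $g\in\mathscr{C}^2(V,\Sigma)$, and $x_*\in V\cap\Sigma$ with $g(x_* )=x_*$, $f(x_* )=0$. Assumption 1: there is $K\in(0,1)$ with $\|f(g(x))\|_2\le K\|f(x)\|_2$ for all $x\in V\cap g^{-1}(V)\cap\Sigma$. Assumption 2: there is $\sigma>0$ with $\sigma\|x-x_*\|_2\le\|f(x)\|_2$ for all $x\in V\cap\Sigma$. $U\subset V\cap g^{-1}(V)$ is a fixed open neighbourhood of $x_*$ such that: (i) for all $x,y\in U$, $\|f(x)-f(y)\|_2\le 2\|\mathrm{D}f(x_* )\|_2\|x-y\|_2$ and $\|f(g(x))-f(g(y))\|_2\le 2\|\mathrm{D}f(x_* )\circ \mathrm{D}g(x_* )\|_2\|x-y\|_2$; (ii) there are $L,L'>0$ with $\|f(x)-\mathrm{D}f(x_* )(x-x_* )\|_2\le\frac L2\|x-x_*\|_2^2$ and $\|g(x)-x_*-\mathrm{D}g(x_* )(x-x_* )\|_2\le\frac{L'}2\|x-x_*\|_2^2$ on $U$; (iii) $U$ is a tubular neighbourhood of $\Sigma\cap U$ on which the nearest-point projection $P_\Sigma$ onto $\Sigma$ is well defined and smooth, and for some $M>0$, $\|P_\Sigma(x)-(x_*+P_{T_{x_*}\Sigma}(x-x_* ))\|_2\le\frac M2\|x-x_*\|_2^2$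 on $U$ ($P_{T_{x_*}\Sigma}$ the orthogonal projector onto the tangent space at $x_*$). Adaptive-depth Anderson–Pulay acceleration with parameter $\delta>0$: given $x^{(0)}$, set $r^{(0)}=f(x^{(0)})$, $m_0=0$. At step $k$: if $m_k=0$, set $c^{(k)}=(1)$ and $x^{(k+1)}=g(x^{(k)})$; otherwise let $c^{(k)}=(c^{(k)}_0,\dots,c^{(k)}_{m_k})$ minimise $\|\sum_{i=0}^{m_k}c_i r^{(k-m_k+i)}\|_2$ subject to $\sum_i c_i=1$, and set $x^{(k+1)}=g\big(\sum_{i=0}^{m_k}c^{(k)}_i x^{(k-m_k+i)}\big)$ (version P) or $x^{(k+1)}=\sum_{i=0}^{m_k}c^{(k)}_i g(x^{(k-m_k+i)})$ (version A, used only when $\Sigma=\mathbb{R}^n$). Then $r^{(k+1)}=f(x^{(k+1)})$ and $m_{k+1}$ is the largest integer $m\le m_k+1$ such that $\delta\|r^{(i)}\|_2<\|r^{(k+1)}\|_2$ for all $i$ with $k+1-m\le i\le k$. Convention: if $r^{(k_{\rm stop})}=0$ for some $k_{\rm stop}$, then $x^{(k)}=x^{(k_{\rm stop})}$, $r^{(k)}=0$, $m_k=0$ for all $k\ge k_{\rm stop}$. *)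

theory Defs
  imports "HOL-Analysis.Analysis"
begin

fun iter_dd :: "('a::real_normed_vector \<Rightarrow> 'b::real_normed_vector) \<Rightarrow> 'a list \<Rightarrow> 'a \<Rightarrow> 'b" where
  "iter_dd h [] = h"
| "iter_dd h (v # vs) = (\<lambda>x. frechet_derivative (iter_dd h vs) (at x) v)"

definition C_k_on :: "nat \<Rightarrow> 'a::real_normed_vector set \<Rightarrow> ('a \<Rightarrow> 'b::real_normed_vector) \<Rightarrow> bool" where
  "C_k_on k S h \<longleftrightarrow>
     (\<forall>vs. length vs < k \<longrightarrow> (\<forall>x\<in>S. iter_dd h vs differentiable (at x))) \<and>
     (\<forall>vs. length vs = k \<longrightarrow> continuous_on S (iter_dd h vs))"

definition smooth_on :: "'a::real_normed_vector set \<Rightarrow> ('a \<Rightarrow> 'b::real_normed_vector) \<Rightarrow> bool" where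
  "smooth_on S h \<longleftrightarrow> (\<forall>k. C_k_on k S h)"

definition is_smooth_submanifold :: "'a::euclidean_space set \<Rightarrow> bool" where
  "is_smooth_submanifold \<Sigma> \<longleftrightarrow>
     (\<forall>a\<in>\<Sigma>. \<exists>W (\<phi>::'a \<Rightarrow> 'a) \<psi> T.
        open W \<and> a \<in> W \<and> open (\<phi> ` W) \<and> smooth_on W \<phi> \<and> smooth_on (\<phi> ` W) \<psi> \<and>
        (\<forall>x\<in>W. \<psi> (\<phi> x) = x) \<and> subspace T \<and> \<phi> ` (W \<inter> \<Sigma>) = \<phi> ` W \<inter> T)"

definition tangent_space :: "'a::euclidean_space set \<Rightarrow> 'a \<Rightarrow> 'a set" where
  "tangent_space \<Sigma> a = {v. \<exists>\<gamma>::real \<Rightarrow> 'a. \<gamma> 0 = a \<and> (\<exists>e>0. \<forall>t. \<bar>t\<bar> < e \<longrightarrow> \<gamma> t \<in> \<Sigma>) \<and>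
                                  (\<gamma> has_vector_derivative v) (at 0)}"

definition is_LS_min :: "(nat \<Rightarrow> 'b::real_normed_vector) \<Rightarrow> nat \<Rightarrow> nat \<Rightarrow> (nat \<Rightarrow> real) \<Rightarrow> bool" where
  "is_LS_min r k mk d \<longleftrightarrow>
     (\<Sum>i\<le>mk. d i) = 1 \<and>
     (\<forall>e. (\<Sum>i\<le>mk. e i) = 1 \<longrightarrow>
        norm (\<Sum>i\<le>mk. d i *\<^sub>R r (k - mk + i)) \<le> norm (\<Sum>i\<le>mk. e i *\<^sub>R r (k - mk + i)))"

text \<open>A run of adaptive-depth Anderson-Pulay acceleration with parameter delta.
  vP = True: version P; vP = False: version A.  c k i is c^(k)_i (0 \<le> i \<le> m k).\<close>
definition AAP_run :: "bool \<Rightarrow> ('a::euclidean_space \<Rightarrow> 'b::euclidean_space) \<Rightarrow> ('a \<Rightarrow> 'a) \<Rightarrow> real \<Rightarrow>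
    (nat \<Rightarrow> 'a) \<Rightarrow> (nat \<Rightarrow> 'b) \<Rightarrow> (nat \<Rightarrow> nat) \<Rightarrow> (nat \<Rightarrow> nat \<Rightarrow> real) \<Rightarrow> bool" where
  "AAP_run vP f g \<delta> x r m c \<longleftrightarrow>
     (\<forall>k. r k = f (x k)) \<and> m 0 = 0 \<and>
     (\<forall>k. r k = 0 \<longrightarrow> (\<forall>j\<ge>k. x j = x k \<and> r j = 0 \<and> m j = 0)) \<and>
     (\<forall>k. (\<forall>j\<le>k. r j \<noteq> 0) \<longrightarrow>
        (if m k = 0 then c k 0 = 1 \<and> x (Suc k) = g (x k)
         else is_LS_min r k (m k) (c k) \<and>
              x (Suc k) = (if vP then g (\<Sum>i\<le>m k. c k i *\<^sub>R x (k - m k + i))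
                           else (\<Sum>i\<le>m k. c k i *\<^sub>R g (x (k - m k + i))))) \<and>
        m (Suc k) = (GREATEST mm. mm \<le> m k + 1 \<and>
                       (\<forall>i. Suc k - mm \<le> i \<and> i \<le> k \<longrightarrow> \<delta> * norm (r i) < norm (r (Suc k)))))"

end

theory Submission
  imports Defs
begin

text \<open>
  The adaptive depth rule keeps in the window only residuals \<open>r\<^sub>i\<close> with
  \<open>\<delta> \<parallel>r\<^sub>i\<parallel> < \<parallel>r\<^sub>k\<^sub>+\<^sub>1\<parallel>\<close>. Together with the contraction \<open>\<mu>\<close> of each step this
  shows, inductively, that every residual of the window is at most \<open>\<mu>\<close> times any affine
  combination of the earlier residuals of the window. Such a window is affinely independent, so
  its length is at most the dimension \<open>p\<close>, and the least-squares coefficients obey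
  \<open>\<Sum>|c\<^sub>i| \<le> 4 (3/(1-\<mu>))\<^sup>m\<close>. With this bound one accelerated step is, up to an error
  quadratic in the distance to \<open>x\<^sub>*\<close>, the fixed-point map applied to an affine combination:
  the new residual is at most \<open>K\<close> times the least-squares residual plus \<open>O(\<delta>\<^sup>2)\<close> times the
  oldest residual of the window, and \<open>c\<^sub>\<mu>\<close> is chosen so small that this error fits into the
  margin \<open>\<mu> - K\<close>.
\<close>

section \<open>Least-squares problems on windows of decreasing vectors\<close>

lemma closest_point_affine_inner:
  fixes S :: "'a::euclidean_space set"
  assumes "affine S" "closed S" "S \<noteq> {}" "h \<in> S"
  shows "h \<bullet> closest_point S 0 = closest_point S 0 \<bullet> closest_point S 0"
proof -
  let ?w = "closest_point S 0"
  have w: "?w \<in> S" "\<forall>y\<in>S. dist 0 ?w \<le> dist 0 y"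
    using closest_point_exists[OF assms(2,3), of 0] by blast+
  have cv: "convex S" using assms(1) affine_imp_convex by blast
  have "(0 - ?w) \<bullet> (h - ?w) \<le> 0"
    by (rule any_closest_point_dot[OF cv assms(2) w(1) assms(4) w(2)])
  moreover have "2 *\<^sub>R ?w + (-1) *\<^sub>R h \<in> S"
    by (rule mem_affine[OF assms(1) w(1) assms(4)]) simp
  then have "(0 - ?w) \<bullet> ((2 *\<^sub>R ?w + (-1) *\<^sub>R h) - ?w) \<le> 0"
    by (rule any_closest_point_dot[OF cv assms(2) w(1) _ w(2)])
  ultimately show ?thesis
    by (simp add: inner_diff_left inner_diff_right inner_add_right inner_commute algebra_simps)
qed

lemma affine_hull_finite_image_explicit:
  fixes v :: "'i \<Rightarrow> 'a::euclidean_space"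
  assumes "finite I" "y \<in> affine hull (v ` I)"
  obtains e where "(\<Sum>i\<in>I. e i) = 1" "y = (\<Sum>i\<in>I. e i *\<^sub>R v i)"
proof -
  obtain u where u: "sum u (v ` I) = 1" "(\<Sum>p\<in>v ` I. u p *\<^sub>R p) = y"
    using assms affine_hull_finite[of "v ` I"] by auto
  \<comment> \<open>the weight of a point is shared equally among the indices mapped to it\<close>
  define F where "F p = {j \<in> I. v j = p}" for p
  define e where "e i = u (v i) / real (card (F (v i)))" for i
  have card_pos: "card (F p) > 0" if "p \<in> v ` I" for p
    using that assms(1) by (auto simp: F_def card_gt_0_iff)
  have fibre_weight: "(\<Sum>i\<in>F p. e i) = u p" if "p \<in> v ` I" for p
  proof -
    have "(\<Sum>i\<in>F p. e i) = (\<Sum>i\<in>F p. u p / real (card (F p)))"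
      by (rule sum.cong) (auto simp: e_def F_def)
    then show ?thesis using card_pos[OF that] by simp
  qed
  have fibre_point: "(\<Sum>i\<in>F p. e i *\<^sub>R v i) = u p *\<^sub>R p" if "p \<in> v ` I" for p
  proof -
    have "(\<Sum>i\<in>F p. e i *\<^sub>R v i) = (\<Sum>i\<in>F p. e i) *\<^sub>R p"
      by (simp add: scaleR_sum_left F_def)
    then show ?thesis using fibre_weight[OF that] by simp
  qed
  have "(\<Sum>i\<in>I. e i) = (\<Sum>p\<in>v ` I. \<Sum>i\<in>F p. e i)"
    unfolding F_def by (rule sum.image_gen[OF assms(1)])
  also have "\<dots> = 1" using fibre_weight u(1) by simp
  finally have "(\<Sum>i\<in>I. e i) = 1" .
  moreover have "(\<Sum>i\<in>I. e i *\<^sub>R v i) = (\<Sum>p\<in>v ` I. \<Sum>i\<in>F p. e i *\<^sub>R v i)"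
    unfolding F_def by (rule sum.image_gen[OF assms(1)])
  then have "(\<Sum>i\<in>I. e i *\<^sub>R v i) = y" using fibre_point u(2) by simp
  ultimately show ?thesis using that by auto
qed

text \<open>The inductive step for the coefficient bound: \<open>w\<close> is the point of the affine hull of the
  previous vectors closest to the origin, so every previous vector, and hence \<open>u\<close>, has the same
  inner product with \<open>w\<close>; the new vector \<open>v\<close> is much shorter than \<open>w\<close>, so its coefficient
  \<open>t\<close> cannot be large without making \<open>u + t v\<close> long.\<close>
lemma last_coeff_bound:
  fixes u v w :: "'a::real_inner"
  assumes mu: "0 \<le> \<mu>" "\<mu> < 1" and "w \<noteq> 0" and v: "norm v \<le> \<mu> * norm w"
    and u: "u \<bullet> w = s * (w \<bullet> w)"
  shows "\<bar>t\<bar> * (1 - \<mu>) \<le> \<bar>s + t\<bar> + norm (u + t *\<^sub>R v) / norm w"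
proof -
  define N where "N = norm w"
  have N: "0 < N" "w \<bullet> w = N\<^sup>2" using \<open>w \<noteq> 0\<close> by (simp_all add: N_def power2_norm_eq_inner)
  have "\<bar>v \<bullet> w\<bar> \<le> \<mu> * N\<^sup>2"
    using Cauchy_Schwarz_ineq2[of v w] v mult_right_mono[OF v norm_ge_zero[of w]]
    by (simp add: N_def power2_eq_square)
  then have gap: "(1 - \<mu>) * N\<^sup>2 \<le> \<bar>v \<bullet> w - w \<bullet> w\<bar>"
    using N(2) abs_ge_self[of "v \<bullet> w"] abs_ge_minus_self[of "v \<bullet> w - w \<bullet> w"]
    unfolding left_diff_distrib mult_1 by linarith
  have "\<bar>t\<bar> * ((1 - \<mu>) * N\<^sup>2) \<le> \<bar>t\<bar> * \<bar>v \<bullet> w - w \<bullet> w\<bar>"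
    using gap by (simp add: mult_left_mono)
  also have "\<dots> = \<bar>(u + t *\<^sub>R v) \<bullet> w - (s + t) * N\<^sup>2\<bar>"
    using u N(2) by (simp add: inner_add_left abs_mult[symmetric] algebra_simps)
  also have "\<dots> \<le> norm (u + t *\<^sub>R v) * N + \<bar>s + t\<bar> * N\<^sup>2"
    using Cauchy_Schwarz_ineq2[of "u + t *\<^sub>R v" w]
      abs_triangle_ineq4[of "(u + t *\<^sub>R v) \<bullet> w" "(s + t) * N\<^sup>2"]
    by (simp add: N_def abs_mult)
  finally have "\<bar>t\<bar> * (1 - \<mu>) * N\<^sup>2 \<le> (\<bar>s + t\<bar> + norm (u + t *\<^sub>R v) / N) * N\<^sup>2"
    using N(1) by (simp add: algebra_simps power2_eq_square)
  then show ?thesis using N(1) by (simp add: N_def mult_le_cancel_right)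
qed

definition decreasing_window :: "real \<Rightarrow> (nat \<Rightarrow> 'a::real_normed_vector) \<Rightarrow> nat \<Rightarrow> nat \<Rightarrow> bool" where
  "decreasing_window \<mu> v a n \<longleftrightarrow> (\<forall>j\<le>n. v (a + j) \<noteq> 0) \<and>
     (\<forall>j\<in>{1..n}. \<forall>h\<in>affine hull (v ` {a..a + (j - 1)}). norm (v (a + j)) \<le> \<mu> * norm h)"

lemma window_coeff_bound_step:
  fixes v :: "nat \<Rightarrow> 'a::euclidean_space"
  assumes mu: "0 \<le> \<mu>" "\<mu> < 1" and A: "1 \<le> A"
    and IH: "\<And>c. (\<Sum>i\<in>{a..a+n}. \<bar>c i\<bar>) \<le>
               A * (\<bar>\<Sum>i\<in>{a..a+n}. c i\<bar> + norm (\<Sum>i\<in>{a..a+n}. c i *\<^sub>R v i) / D)"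
    and w: "w = closest_point (affine hull (v ` {a..a+n})) 0" "w \<noteq> 0" "norm w \<le> D"
    and last: "norm (v (Suc (a + n))) \<le> \<mu> * norm w"
  shows "(\<Sum>i\<in>{a..a + Suc n}. \<bar>c i\<bar>) \<le> (3 / (1 - \<mu>) * (A + 1) - 1) *
           (\<bar>\<Sum>i\<in>{a..a + Suc n}. c i\<bar> + norm (\<Sum>i\<in>{a..a + Suc n}. c i *\<^sub>R v i) / norm w)"
proof -
  define t where "t = c (Suc (a + n))"
  define s where "s = (\<Sum>i\<in>{a..a+n}. c i)"
  define u where "u = (\<Sum>i\<in>{a..a+n}. c i *\<^sub>R v i)"
  define X where "X = \<bar>s + t\<bar> + norm (u + t *\<^sub>R v (Suc (a + n))) / norm w"
  define \<beta> where "\<beta> = 1 / (1 - \<mu>)"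
  have \<beta>: "1 \<le> \<beta>" using mu by (simp add: \<beta>_def field_simps)
  have w_pos: "0 < norm w" using w(2) by simp
  have "u \<bullet> w = s * (w \<bullet> w)"
  proof -
    have "v i \<bullet> w = w \<bullet> w" if "i \<in> {a..a+n}" for i
      unfolding w(1) using that
      by (intro closest_point_affine_inner) (auto simp: hull_inc closed_affine_hull)
    then show ?thesis by (simp add: u_def s_def inner_sum_left sum_distrib_right)
  qed
  then have "\<bar>t\<bar> * (1 - \<mu>) \<le> X"
    unfolding X_def by (rule last_coeff_bound[OF mu w(2) last])
  then have t: "\<bar>t\<bar> \<le> \<beta> * X" using mu by (simp add: \<beta>_def field_simps)
  have "norm u \<le> norm (u + t *\<^sub>R v (Suc (a + n))) + \<bar>t\<bar> * (\<mu> * norm w)"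
    using norm_triangle_ineq4[of "u + t *\<^sub>R v (Suc (a + n))" "t *\<^sub>R v (Suc (a + n))"]
      mult_left_mono[OF last abs_ge_zero[of t]] by simp
  then have "norm u / D \<le> norm (u + t *\<^sub>R v (Suc (a + n))) / norm w + \<mu> * \<bar>t\<bar>"
    using frac_le[OF norm_ge_zero order_refl w_pos w(3), of u] w_pos by (simp add: field_simps)
  then have "\<bar>s\<bar> + norm u / D \<le> X + 2 * \<bar>t\<bar>"
    using mu mult_right_le_one_le[of "\<bar>t\<bar>" \<mu>] unfolding X_def by (simp add: mult.commute)
  then have "A * (\<bar>s\<bar> + norm u / D) \<le> A * (X + 2 * \<bar>t\<bar>)"
    using A by (intro mult_left_mono) auto
  then have "(\<Sum>i\<in>{a..a+n}. \<bar>c i\<bar>) \<le> A * X + 2 * A * \<bar>t\<bar>"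
    using IH[of c] unfolding s_def u_def by (simp add: algebra_simps)
  also have "\<dots> + \<bar>t\<bar> \<le> A * X + (1 + 2 * A) * (\<beta> * X)"
    using mult_left_mono[OF t, of "1 + 2 * A"] A by (simp add: algebra_simps)
  also have "\<dots> = (A + (1 + 2 * A) * \<beta>) * X" by (simp add: algebra_simps)
  also have "\<dots> \<le> (3 * \<beta> * (A + 1) - 1) * X"
  proof (rule mult_right_mono)
    show "0 \<le> X" unfolding X_def by simp
    have "A + 1 \<le> \<beta> * (A + 1)" using \<beta> A by (simp add: mult_right_mono)
    then show "A + (1 + 2 * A) * \<beta> \<le> 3 * \<beta> * (A + 1) - 1"
      using \<beta> by (simp add: algebra_simps)
  qed
  finally show ?thesis
    by (simp add: t_def s_def u_def X_def \<beta>_def add.assoc)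
qed

lemma decreasing_window_mono:
  "decreasing_window \<mu> v a n \<Longrightarrow> m \<le> n \<Longrightarrow> decreasing_window \<mu> v a m"
  unfolding decreasing_window_def by auto

lemma decreasing_window_coeff_bound:
  fixes v :: "nat \<Rightarrow> 'a::euclidean_space"
  assumes mu: "0 \<le> \<mu>" "\<mu> < 1" and "decreasing_window \<mu> v a n"
  defines "D \<equiv> norm (closest_point (affine hull (v ` {a..a + (n - 1)})) 0)"
  shows "0 < D \<and> (\<forall>c. (\<Sum>i\<in>{a..a+n}. \<bar>c i\<bar>) \<le> (2 * (3 / (1 - \<mu>)) ^ n - 1) *
           (\<bar>\<Sum>i\<in>{a..a+n}. c i\<bar> + norm (\<Sum>i\<in>{a..a+n}. c i *\<^sub>R v i) / D))"
  using assms(3) unfolding D_def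
proof (induction n)
  case 0
  then have "v a \<noteq> 0" by (simp add: decreasing_window_def)
  moreover have "closest_point {v a} 0 = v a"
    using closest_point_in_set[of "{v a}" 0] by auto
  ultimately show ?case by simp
next
  case (Suc n)
  let ?H = "affine hull (v ` {a..a+n})"
  define w where "w = closest_point ?H 0"
  define A where "A = 2 * (3 / (1 - \<mu>)) ^ n - 1"
  have IH: "0 < norm (closest_point (affine hull (v ` {a..a + (n - 1)})) 0)"
    "\<And>c. (\<Sum>i\<in>{a..a+n}. \<bar>c i\<bar>) \<le> A * (\<bar>\<Sum>i\<in>{a..a+n}. c i\<bar> +
       norm (\<Sum>i\<in>{a..a+n}. c i *\<^sub>R v i) /
         norm (closest_point (affine hull (v ` {a..a + (n - 1)})) 0))"
    using Suc.IH decreasing_window_mono[OF Suc.prems] unfolding A_def by auto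
  have "w \<in> ?H" unfolding w_def by (rule closest_point_in_set) auto
  then have last: "norm (v (Suc (a + n))) \<le> \<mu> * norm w"
    using Suc.prems unfolding decreasing_window_def
    by (auto dest!: bspec[where x="Suc n"])
  have "v (Suc (a + n)) \<noteq> 0" using Suc.prems unfolding decreasing_window_def
    by (auto dest!: spec[where x="Suc n"])
  then have w0: "w \<noteq> 0" using last by auto
  have wD: "norm w \<le> norm (closest_point (affine hull (v ` {a..a + (n - 1)})) 0)"
  proof -
    have "affine hull (v ` {a..a + (n - 1)}) \<subseteq> ?H" by (intro hull_mono image_mono) auto
    moreover have
      "closest_point (affine hull (v ` {a..a + (n - 1)})) 0 \<in> affine hull (v ` {a..a + (n - 1)})"
      by (rule closest_point_in_set) auto
    ultimately show ?thesis
      using closest_point_le[OF closed_affine_hull] unfolding w_def by (metis dist_0_norm subsetD)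
  qed
  have "1 \<le> (3 / (1 - \<mu>)) ^ n" using mu by (intro one_le_power) (simp add: field_simps)
  then have "1 \<le> A" unfolding A_def by simp
  note bound = window_coeff_bound_step[OF mu this IH(2) w_def w0 wD last]
  have "3 / (1 - \<mu>) * (A + 1) - 1 = 2 * (3 / (1 - \<mu>)) ^ Suc n - 1"
    unfolding A_def by simp
  then show ?case using w0 bound unfolding w_def by auto
qed

lemma sum_atMost_shift:
  fixes F :: "nat \<Rightarrow> 'b::comm_monoid_add"
  shows "(\<Sum>i\<le>m. F i) = (\<Sum>j\<in>{a..a+m}. F (j - a))"
proof -
  have "(\<Sum>j\<in>{0+a..m+a}. F (j - a)) = (\<Sum>i\<in>{0..m}. F (i + a - a))"
    by (rule sum.shift_bounds_cl_nat_ivl)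
  then show ?thesis by (simp add: atMost_atLeast0 add.commute)
qed

lemma combination_atMost_shift:
  fixes r :: "nat \<Rightarrow> 'b::real_vector"
  shows "(\<Sum>i\<le>m. c i *\<^sub>R r (a + i)) = (\<Sum>j\<in>{a..a+m}. c (j - a) *\<^sub>R r j)"
  by (subst sum_atMost_shift[where a = a]) (rule sum.cong, auto simp: add_diff_inverse_nat)

lemma is_LS_min_le:
  fixes r :: "nat \<Rightarrow> 'a::real_normed_vector"
  assumes "is_LS_min r (a + m) m c" "I \<subseteq> {a..a+m}" "(\<Sum>j\<in>I. e j) = 1"
  shows "norm (\<Sum>i\<le>m. c i *\<^sub>R r (a + i)) \<le> norm (\<Sum>j\<in>I. e j *\<^sub>R r j)"
proof -
  define d where "d i = (if a + i \<in> I then e (a + i) else 0)" for i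
  have restrict: "(\<Sum>j\<in>{a..a+m}. if j \<in> I then F j else 0) = (\<Sum>j\<in>I. F j)"
    for F :: "nat \<Rightarrow> 'b::comm_monoid_add"
    using sum.inter_restrict[of "{a..a+m}" F I] assms(2) by (simp add: Int_absorb1)
  have shifted: "(\<Sum>i\<le>m. d i *\<^sub>R v (a + i)) = (\<Sum>j\<in>I. e j *\<^sub>R v j)" for v :: "nat \<Rightarrow> 'b::real_vector"
    using restrict[of "\<lambda>j. e j *\<^sub>R v j"] unfolding combination_atMost_shift
    by (simp add: d_def add_diff_inverse_nat if_distrib[of "\<lambda>t. t *\<^sub>R _"] cong: if_cong)
  have "(\<Sum>i\<le>m. d i) = 1"
    using shifted[of "\<lambda>_. 1::real"] assms(3) by simp
  then have "norm (\<Sum>i\<le>m. c i *\<^sub>R r (a + i)) \<le> norm (\<Sum>i\<le>m. d i *\<^sub>R r (a + i))"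
    using assms(1) unfolding is_LS_min_def by simp
  also have "\<dots> = norm (\<Sum>j\<in>I. e j *\<^sub>R r j)" by (simp only: shifted)
  finally show ?thesis .
qed

lemma is_LS_min_le_hull:
  fixes r :: "nat \<Rightarrow> 'a::euclidean_space"
  assumes "is_LS_min r (a + m) m c" "I \<subseteq> {a..a+m}" "h \<in> affine hull (r ` I)"
  shows "norm (\<Sum>i\<le>m. c i *\<^sub>R r (a + i)) \<le> norm h"
proof -
  have "finite I" using assms(2) finite_subset by blast
  then obtain e where "(\<Sum>i\<in>I. e i) = 1" "h = (\<Sum>i\<in>I. e i *\<^sub>R r i)"
    using affine_hull_finite_image_explicit assms(3) by blast
  then show ?thesis using is_LS_min_le[OF assms(1,2)] by simp
qed

text \<open>The norm of an inner product space is strictly convex, so all minimisers share one residual.\<close>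
lemma is_LS_min_residual_unique:
  fixes r :: "nat \<Rightarrow> 'a::real_inner"
  assumes c: "is_LS_min r k m c" and d: "is_LS_min r k m d"
  shows "(\<Sum>i\<le>m. d i *\<^sub>R r (k - m + i)) = (\<Sum>i\<le>m. c i *\<^sub>R r (k - m + i))"
proof -
  let ?c = "\<Sum>i\<le>m. c i *\<^sub>R r (k - m + i)" and ?d = "\<Sum>i\<le>m. d i *\<^sub>R r (k - m + i)"
  have sums: "(\<Sum>i\<le>m. c i) = 1" "(\<Sum>i\<le>m. d i) = 1" using c d unfolding is_LS_min_def by auto
  then have eq: "norm ?d = norm ?c" using c d unfolding is_LS_min_def by (meson antisym)
  have "(\<Sum>i\<le>m. 1/2 * d i + 1/2 * c i) = 1"
    using sums by (simp add: sum.distrib sum_divide_distrib[symmetric])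
  then have "norm ?d \<le> norm (\<Sum>i\<le>m. (1/2 * d i + 1/2 * c i) *\<^sub>R r (k - m + i))"
    using d unfolding is_LS_min_def by blast
  also have "(\<Sum>i\<le>m. (1/2 * d i + 1/2 * c i) *\<^sub>R r (k - m + i)) = (1/2) *\<^sub>R (?d + ?c)"
    by (simp add: scaleR_add_left sum.distrib scaleR_sum_right scaleR_add_right)
  finally have "(2 * norm ?d)\<^sup>2 \<le> (norm (?d + ?c))\<^sup>2" by (intro power_mono) auto
  moreover have "(norm (?d - ?c))\<^sup>2 + (norm (?d + ?c))\<^sup>2 = 2 * (norm ?d)\<^sup>2 + 2 * (norm ?c)\<^sup>2"
    by (simp add: power2_norm_eq_inner inner_add_left inner_add_right inner_diff_left
        inner_diff_right inner_commute algebra_simps)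
  ultimately have "(norm (?d - ?c))\<^sup>2 \<le> 0" using eq by (simp add: power2_eq_square)
  then show ?thesis by simp
qed

context
  fixes \<mu> :: real and v :: "nat \<Rightarrow> 'a::euclidean_space" and a m :: nat
  assumes mu: "0 \<le> \<mu>" "\<mu> < 1" and window: "decreasing_window \<mu> v a m"
begin

lemma decreasing_window_combination_eq_0:
  assumes "(\<Sum>j\<in>{a..a+m}. z j) = 0" "(\<Sum>j\<in>{a..a+m}. z j *\<^sub>R v j) = 0" "j \<in> {a..a+m}"
  shows "z j = 0"
proof -
  have "(\<Sum>j\<in>{a..a+m}. \<bar>z j\<bar>) \<le> 0"
    using decreasing_window_coeff_bound[OF mu window] assms(1,2) by (metis (no_types) abs_zero
        add.right_neutral div_0 mult_zero_right norm_zero)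
  then have "(\<Sum>j\<in>{a..a+m}. \<bar>z j\<bar>) = 0" by (simp add: antisym sum_nonneg)
  then show ?thesis using assms(3) by (simp add: sum_nonneg_eq_0_iff)
qed

lemma decreasing_window_inj_on: "inj_on v {a..a+m}"
proof (rule inj_onI, rule ccontr)
  fix i j assume ij: "i \<in> {a..a+m}" "j \<in> {a..a+m}" "v i = v j" "i \<noteq> j"
  define z where "z l = (if l = i then 1 else 0) - (if l = j then 1 else (0::real))" for l
  have "(\<Sum>l\<in>{a..a+m}. z l) = 0" using ij by (simp add: z_def sum_subtractf)
  moreover have "(\<Sum>l\<in>{a..a+m}. z l *\<^sub>R v l) = 0"
    using ij
    by (simp add: z_def scaleR_diff_left sum_subtractf if_distrib[of "\<lambda>t. t *\<^sub>R _"] cong: if_cong)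
  ultimately have "z i = 0" using decreasing_window_combination_eq_0 ij(1) by blast
  then show False using ij(4) by (simp add: z_def)
qed

lemma decreasing_window_le_DIM: "m \<le> DIM('a)"
proof -
  have "\<not> affine_dependent (v ` {a..a+m})"
  proof
    assume "affine_dependent (v ` {a..a+m})"
    then obtain u where u: "sum u (v ` {a..a+m}) = 0" "\<exists>p\<in>v ` {a..a+m}. u p \<noteq> 0"
      "(\<Sum>p\<in>v ` {a..a+m}. u p *\<^sub>R p) = 0"
      using affine_dependent_explicit_finite[of "v ` {a..a+m}"] by auto
    have "(\<Sum>j\<in>{a..a+m}. u (v j)) = 0" "(\<Sum>j\<in>{a..a+m}. u (v j) *\<^sub>R v j) = 0"
      using u(1,3) by (simp_all add: sum.reindex[OF decreasing_window_inj_on])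
    then show False using u(2) decreasing_window_combination_eq_0 by blast
  qed
  moreover have "card (v ` {a..a+m}) = m + 1" by (simp add: card_image[OF decreasing_window_inj_on])
  ultimately show ?thesis using affine_dependent_biggerset[of "v ` {a..a+m}"] by fastforce
qed

lemma decreasing_window_LS_coeff_bound:
  assumes "is_LS_min v (a + m) m c"
  shows "(\<Sum>i\<le>m. \<bar>c i\<bar>) \<le> 2 * (2 * (3 / (1 - \<mu>)) ^ m - 1)"
proof -
  define D where "D = norm (closest_point (affine hull (v ` {a..a + (m - 1)})) 0)"
  define A where "A = 2 * (3 / (1 - \<mu>)) ^ m - 1"
  have bound: "0 < D" "(\<Sum>j\<in>{a..a+m}. \<bar>c (j - a)\<bar>) \<le>
      A * (\<bar>\<Sum>j\<in>{a..a+m}. c (j - a)\<bar> + norm (\<Sum>j\<in>{a..a+m}. c (j - a) *\<^sub>R v j) / D)"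
    using decreasing_window_coeff_bound[OF mu window] unfolding D_def A_def by auto
  have "1 \<le> (3 / (1 - \<mu>)) ^ m" using mu by (intro one_le_power) (simp add: field_simps)
  then have "0 \<le> A" unfolding A_def by simp
  \<comment> \<open>the closest point to the origin of the shorter window is a feasible residual\<close>
  have "norm (\<Sum>i\<le>m. c i *\<^sub>R v (a + i)) \<le> D"
    unfolding D_def
    by (rule is_LS_min_le_hull[OF assms _ closest_point_in_set[OF closed_affine_hull]]) auto
  then have "norm (\<Sum>i\<le>m. c i *\<^sub>R v (a + i)) / D \<le> 1" using bound(1) by simp
  moreover have "(\<Sum>j\<in>{a..a+m}. c (j - a)) = 1"
    using assms unfolding is_LS_min_def sum_atMost_shift[where a = a] by simp
  ultimately have "\<bar>\<Sum>j\<in>{a..a+m}. c (j - a)\<bar> + norm (\<Sum>j\<in>{a..a+m}. c (j - a) *\<^sub>R v j) / D \<le> 2"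
    unfolding combination_atMost_shift[symmetric] by simp
  then have "(\<Sum>j\<in>{a..a+m}. \<bar>c (j - a)\<bar>) \<le> A * 2"
    using bound(2) mult_left_mono[OF _ \<open>0 \<le> A\<close>] by (meson order_trans)
  then show ?thesis unfolding A_def sum_atMost_shift[where a = a, of "\<lambda>i. \<bar>c i\<bar>"] by simp
qed

lemma decreasing_window_LS_unique:
  assumes c: "is_LS_min v (a + m) m c" and d: "is_LS_min v (a + m) m d" and "i \<le> m"
  shows "d i = c i"
proof -
  define z where "z j = d (j - a) - c (j - a)" for j
  have "(\<Sum>i\<le>m. c i) = 1" "(\<Sum>i\<le>m. d i) = 1" using c d unfolding is_LS_min_def by auto
  then have "(\<Sum>j\<in>{a..a+m}. z j) = 0"
    by (simp add: z_def sum_subtractf sum_atMost_shift[where a = a, symmetric])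
  moreover have "(\<Sum>j\<in>{a..a+m}. z j *\<^sub>R v j) = 0"
    using is_LS_min_residual_unique[OF c d]
    by (simp add: z_def scaleR_diff_left sum_subtractf combination_atMost_shift)
  ultimately have "z (a + i) = 0" using decreasing_window_combination_eq_0 \<open>i \<le> m\<close> by simp
  then show ?thesis by (simp add: z_def)
qed

end

section \<open>Tangent spaces of embedded submanifolds\<close>

lemma C_k_on_differentiable:
  assumes "C_k_on k S h" "0 < k" "x \<in> S"
  shows "h differentiable (at x)"
proof -
  have "\<forall>x\<in>S. iter_dd h [] differentiable (at x)"
    using assms(1,2) unfolding C_k_on_def by (metis list.size(3))
  then show ?thesis using assms(3) by simp
qed

lemma smooth_on_differentiable: "smooth_on S h \<Longrightarrow> x \<in> S \<Longrightarrow> h differentiable (at x)"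
  unfolding smooth_on_def by (blast intro: C_k_on_differentiable[of 1])

context
  fixes \<Sigma> W T :: "'a::euclidean_space set" and \<phi> \<psi> :: "'a \<Rightarrow> 'a" and p :: 'a
  assumes chart: "open W" "p \<in> W" "open (\<phi> ` W)" "smooth_on W \<phi>" "smooth_on (\<phi> ` W) \<psi>"
      "\<forall>x\<in>W. \<psi> (\<phi> x) = x" "subspace T" "\<phi> ` (W \<inter> \<Sigma>) = \<phi> ` W \<inter> T"
    and p: "p \<in> \<Sigma>"
begin

private abbreviation "D\<phi> \<equiv> frechet_derivative \<phi> (at p)"
private abbreviation "D\<psi> \<equiv> frechet_derivative \<psi> (at (\<phi> p))"

private lemma chart_derivatives:
  "(\<phi> has_derivative D\<phi>) (at p)" "(\<psi> has_derivative D\<psi>) (at (\<phi> p))" "\<And>v. D\<psi> (D\<phi> v) = v"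
proof -
  show d\<phi>: "(\<phi> has_derivative D\<phi>) (at p)"
    using smooth_on_differentiable[OF chart(4,2)] frechet_derivative_works by blast
  show d\<psi>: "(\<psi> has_derivative D\<psi>) (at (\<phi> p))"
    using smooth_on_differentiable[OF chart(5)] chart(2) frechet_derivative_works by blast
  have "((\<psi> \<circ> \<phi>) has_derivative (\<lambda>x. x)) (at p)"
    by (rule has_derivative_transform_within_open[OF has_derivative_ident chart(1,2)])
      (use chart(6) in auto)
  then show "D\<psi> (D\<phi> v) = v" for v
    using has_derivative_unique[OF diff_chain_at[OF d\<phi> d\<psi>]] by (metis comp_apply)
qed

private lemma chart_point_in_subspace: "\<phi> p \<in> T"
  using chart(2,8) p by blast

text \<open>A curve in \<open>\<Sigma>\<close> is mapped by the chart into \<open>T\<close>, so its velocity is mapped into \<open>T\<close>: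
  every component orthogonal to \<open>T\<close> vanishes identically along the curve.\<close>
private lemma tangent_space_subset_chart: "tangent_space \<Sigma> p \<subseteq> D\<psi> ` T"
proof
  fix v assume "v \<in> tangent_space \<Sigma> p"
  then obtain \<gamma> e where \<gamma>: "\<gamma> 0 = p" "e > 0" "\<forall>t. \<bar>t\<bar> < e \<longrightarrow> \<gamma> t \<in> \<Sigma>"
    "(\<gamma> has_vector_derivative v) (at 0)"
    unfolding tangent_space_def by blast
  have velocity: "((\<phi> \<circ> \<gamma>) has_vector_derivative D\<phi> v) (at 0)"
    using vector_derivative_diff_chain_within[of \<gamma> v 0 UNIV \<phi> D\<phi>] \<gamma>(1,4) chart_derivatives(1)
    by (simp add: has_derivative_at_withinI)
  have "eventually (\<lambda>t. \<gamma> t \<in> W) (at 0)"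
    using has_vector_derivative_continuous[OF \<gamma>(4)] chart(1,2) \<gamma>(1) unfolding isCont_def
    using topological_tendstoD by fastforce
  moreover have "eventually (\<lambda>t. \<bar>t\<bar> < e) (at (0::real))"
    using \<gamma>(2) eventually_at[of "\<lambda>t. \<bar>t\<bar> < e" 0 UNIV] by (auto simp: dist_real_def)
  ultimately have in_T: "eventually (\<lambda>t. \<phi> (\<gamma> t) \<in> T) (at 0)"
    by eventually_elim (use \<gamma>(3) chart(8) in blast)
  have "D\<phi> v \<in> T\<^sup>\<bottom>\<^sup>\<bottom>"
  proof (unfold orthogonal_comp_def orthogonal_def, intro CollectI ballI)
    fix z assume "z \<in> {x. \<forall>y\<in>T. y \<bullet> x = 0}"
    then have z: "z \<bullet> y = 0" if "y \<in> T" for y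
      using that by (simp add: inner_commute)
    have vanish: "eventually (\<lambda>t. t \<in> UNIV \<longrightarrow> z \<bullet> (\<phi> \<circ> \<gamma>) t = 0) (nhds 0)"
      unfolding eventually_nhds_conv_at using in_T z chart_point_in_subspace \<gamma>(1)
      by (auto elim!: eventually_mono)
    have "((\<lambda>t. z \<bullet> (\<phi> \<circ> \<gamma>) t) has_vector_derivative 0) (at 0)"
      by (subst has_vector_derivative_cong_ev[OF vanish])
        (use z chart_point_in_subspace \<gamma>(1) in auto)
    then show "z \<bullet> D\<phi> v = 0"
      using vector_derivative_unique_at
        bounded_linear.has_vector_derivative[OF bounded_linear_inner_right velocity] by blast
  qed
  then have "D\<phi> v \<in> T" using orthogonal_comp_self[OF chart(7)] by simp
  then show "v \<in> D\<psi> ` T" using chart_derivatives(3)[of v] by (metis image_eqI)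
qed

private lemma chart_subset_tangent_space: "D\<psi> ` T \<subseteq> tangent_space \<Sigma> p"
proof
  fix v assume "v \<in> D\<psi> ` T"
  then obtain w where w: "w \<in> T" "v = D\<psi> w" by blast
  obtain \<rho> where \<rho>: "\<rho> > 0" "ball (\<phi> p) \<rho> \<subseteq> \<phi> ` W"
    using chart(2,3) openE by blast
  define e where "e = \<rho> / (norm w + 1)"
  define \<gamma> where "\<gamma> t = \<psi> (\<phi> p + t *\<^sub>R w)" for t
  have "\<gamma> 0 = p" unfolding \<gamma>_def using chart(2,6) by simp
  moreover have "\<gamma> t \<in> \<Sigma>" if t: "\<bar>t\<bar> < e" for t
  proof -
    have "\<bar>t\<bar> * norm w \<le> \<bar>t\<bar> * (norm w + 1)" by (simp add: mult_left_mono)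
    also have "\<dots> < \<rho>"
      using t pos_less_divide_eq[of "norm w + 1"] by (simp add: e_def add_nonneg_pos)
    finally have "\<phi> p + t *\<^sub>R w \<in> \<phi> ` W" using \<rho>(2) by (auto simp: dist_norm)
    moreover have "\<phi> p + t *\<^sub>R w \<in> T"
      using chart_point_in_subspace w(1) chart(7) by (simp add: subspace_add subspace_scale)
    ultimately obtain y where "y \<in> W \<inter> \<Sigma>" "\<phi> p + t *\<^sub>R w = \<phi> y" using chart(8) by blast
    then show ?thesis unfolding \<gamma>_def using chart(6) by auto
  qed
  moreover have "(\<gamma> has_vector_derivative v) (at 0)"
  proof -
    have "((\<lambda>t. \<phi> p + t *\<^sub>R w) has_vector_derivative w) (at 0)"
      by (auto intro!: derivative_eq_intros)
    then have "((\<psi> \<circ> (\<lambda>t. \<phi> p + t *\<^sub>R w)) has_vector_derivative D\<psi> w) (at 0)"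
      using vector_derivative_diff_chain_within[of _ w 0 UNIV \<psi> D\<psi>] chart_derivatives(2)
      by (simp add: has_derivative_at_withinI)
    then show ?thesis unfolding \<gamma>_def w(2) by (simp add: o_def)
  qed
  moreover have "e > 0" using \<rho>(1) by (simp add: e_def add_nonneg_pos)
  ultimately show "v \<in> tangent_space \<Sigma> p" unfolding tangent_space_def by blast
qed

lemma tangent_space_chart_image: "tangent_space \<Sigma> p = D\<psi> ` T"
  by (rule equalityI[OF tangent_space_subset_chart chart_subset_tangent_space])

end

lemma tangent_space_subspace:
  fixes \<Sigma> :: "'a::euclidean_space set"
  assumes "is_smooth_submanifold \<Sigma>" "p \<in> \<Sigma>"
  shows "subspace (tangent_space \<Sigma> p)"
proof -
  obtain W T and \<phi> \<psi> :: "'a \<Rightarrow> 'a"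
    where chart: "open W" "p \<in> W" "open (\<phi> ` W)" "smooth_on W \<phi>" "smooth_on (\<phi> ` W) \<psi>"
      "\<forall>x\<in>W. \<psi> (\<phi> x) = x" "subspace T" "\<phi> ` (W \<inter> \<Sigma>) = \<phi> ` W \<inter> T"
    using bspec[OF assms(1)[unfolded is_smooth_submanifold_def] assms(2)] by blast
  have "(\<psi> has_derivative frechet_derivative \<psi> (at (\<phi> p))) (at (\<phi> p))"
    using smooth_on_differentiable[OF chart(5)] chart(2) frechet_derivative_works by blast
  then have "linear (frechet_derivative \<psi> (at (\<phi> p)))" using has_derivative_linear by blast
  from linear_subspace_image[OF this chart(7)] show ?thesis
    unfolding tangent_space_chart_image[OF chart assms(2)] .
qed

section \<open>One step near the fixed point\<close>

lemma sum_abs_ge_1: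
  fixes e :: "'i \<Rightarrow> real"
  assumes "(\<Sum>j\<in>J. e j) = 1" "(\<Sum>j\<in>J. \<bar>e j\<bar>) \<le> S"
  shows "1 \<le> S"
  using sum_abs[of e J] assms by simp

lemma norm_sum_scaleR_le:
  fixes v :: "'i \<Rightarrow> 'a::real_normed_vector"
  assumes "\<forall>j\<in>J. norm (v j) \<le> D" "(\<Sum>j\<in>J. \<bar>e j\<bar>) \<le> S" "0 \<le> D"
  shows "norm (\<Sum>j\<in>J. e j *\<^sub>R v j) \<le> S * D"
proof -
  have "norm (\<Sum>j\<in>J. e j *\<^sub>R v j) \<le> (\<Sum>j\<in>J. \<bar>e j\<bar> * D)"
    using assms(1) by (intro order_trans[OF norm_sum sum_mono]) (simp add: mult_left_mono)
  also have "\<dots> \<le> S * D" using assms(2,3) by (simp add: sum_distrib_right[symmetric] mult_right_mono)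
  finally show ?thesis .
qed

lemma affine_combination_diff:
  fixes v :: "'i \<Rightarrow> 'a::real_vector"
  assumes "(\<Sum>j\<in>J. e j) = 1"
  shows "(\<Sum>j\<in>J. e j *\<^sub>R v j) - p = (\<Sum>j\<in>J. e j *\<^sub>R (v j - p))"
  using assms by (simp add: scaleR_diff_right sum_subtractf scaleR_sum_left[symmetric])

lemma taylor_affine_combination:
  fixes h :: "'a::real_normed_vector \<Rightarrow> 'b::real_normed_vector" and x :: "'i \<Rightarrow> 'a"
  assumes D: "linear D" and C: "0 \<le> C"
    and taylor: "\<forall>z\<in>U. norm (h z - h0 - D (z - p)) \<le> C * (norm (z - p))\<^sup>2"
    and e: "(\<Sum>j\<in>J. e j) = 1" "(\<Sum>j\<in>J. \<bar>e j\<bar>) \<le> S"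
    and x: "\<forall>j\<in>J. x j \<in> U \<and> norm (x j - p) \<le> \<Delta>" "0 \<le> \<Delta>"
    and y: "(\<Sum>j\<in>J. e j *\<^sub>R x j) \<in> U" "norm ((\<Sum>j\<in>J. e j *\<^sub>R x j) - p) \<le> S * \<Delta>"
  shows "norm (h (\<Sum>j\<in>J. e j *\<^sub>R x j) - (\<Sum>j\<in>J. e j *\<^sub>R h (x j))) \<le> 2 * C * (S * \<Delta>)\<^sup>2"
proof -
  define y where "y = (\<Sum>j\<in>J. e j *\<^sub>R x j)"
  define R where "R z = h z - h0 - D (z - p)" for z
  have S: "1 \<le> S" by (rule sum_abs_ge_1[OF e])
  have "D (y - p) = (\<Sum>j\<in>J. e j *\<^sub>R D (x j - p))"
    unfolding y_def affine_combination_diff[OF e(1)]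
    by (simp add: linear_sum[OF D] linear_cmul[OF D])
  then have "h y - (\<Sum>j\<in>J. e j *\<^sub>R h (x j)) = R y - (\<Sum>j\<in>J. e j *\<^sub>R R (x j))"
    using e(1) by (simp add: R_def scaleR_diff_right sum_subtractf scaleR_sum_left[symmetric])
  moreover have "norm (R y) \<le> C * (S * \<Delta>)\<^sup>2"
    using taylor y C unfolding R_def y_def
    by (meson mult_left_mono norm_ge_zero order_trans power_mono)
  moreover have "norm (\<Sum>j\<in>J. e j *\<^sub>R R (x j)) \<le> S * (C * \<Delta>\<^sup>2)"
    using taylor x C unfolding R_def
    by (intro norm_sum_scaleR_le[OF _ e(2)])
      (auto, meson mult_left_mono norm_ge_zero order_trans power_mono)
  moreover have "S * (C * \<Delta>\<^sup>2) \<le> C * (S * \<Delta>)\<^sup>2"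
    using S C x(2) by (simp add: power_mult_distrib mult_left_mono mult_right_mono power2_eq_square
        mult.left_commute mult_le_cancel_right1)
  ultimately show ?thesis unfolding y_def
    using norm_triangle_ineq4[of "R y" "\<Sum>j\<in>J. e j *\<^sub>R R (x j)"] by (simp add: y_def)
qed

locale anderson_setting =
  fixes \<Sigma> V U :: "'a::euclidean_space set" and f :: "'a \<Rightarrow> 'b::euclidean_space"
    and g :: "'a \<Rightarrow> 'a" and xs :: 'a and K \<sigma> L L' M \<rho>0 :: real
  assumes f_differentiable: "f differentiable (at xs)"
    and g_differentiable: "g differentiable (at xs)"
    and g_into_\<Sigma>: "g ` V \<subseteq> \<Sigma>"
    and K_pos: "0 < K"
    and contraction: "\<forall>x \<in> V \<inter> g -` V \<inter> \<Sigma>. norm (f (g x)) \<le> K * norm (f x)"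
    and \<sigma>_pos: "0 < \<sigma>"
    and error_le_residual: "\<forall>x \<in> V \<inter> \<Sigma>. \<sigma> * norm (x - xs) \<le> norm (f x)"
    and U_subset: "U \<subseteq> V \<inter> g -` V"
    and lipschitz: "\<forall>x\<in>U. \<forall>y\<in>U.
        norm (f x - f y) \<le> 2 * onorm (frechet_derivative f (at xs)) * norm (x - y) \<and>
        norm (f (g x) - f (g y)) \<le>
          2 * onorm (frechet_derivative f (at xs) \<circ> frechet_derivative g (at xs)) * norm (x - y)"
    and constants_pos: "0 < L" "0 < L'" "0 < M"
    and taylor: "\<forall>x\<in>U.
        norm (f x - frechet_derivative f (at xs) (x - xs)) \<le> L / 2 * norm (x - xs)^2 \<and>
        norm (g x - xs - frechet_derivative g (at xs) (x - xs)) \<le> L' / 2 * norm (x - xs)^2"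
    and projection_unique: "\<forall>x\<in>U.
        (\<exists>!y. y \<in> \<Sigma> \<and> (\<forall>z\<in>\<Sigma>. dist x y \<le> dist x z)) \<and> closest_point \<Sigma> x \<in> U"
    and projection_taylor: "\<forall>x\<in>U.
        norm (closest_point \<Sigma> x - (xs + closest_point (tangent_space \<Sigma> xs) (x - xs)))
          \<le> M / 2 * norm (x - xs)^2"
    and tangent_subspace: "subspace (tangent_space \<Sigma> xs)"
    and ball_in_U: "0 < \<rho>0" "ball xs \<rho>0 \<subseteq> U"
begin

abbreviation "Df \<equiv> frechet_derivative f (at xs)"
abbreviation "Dg \<equiv> frechet_derivative g (at xs)"

definition quad_err :: real where
  "quad_err = K * L + 2 * onorm Df * L' + 2 * K * onorm Df * M + 2 * onorm (Df \<circ> Dg) * M"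

lemma bounded_linear_Df: "bounded_linear Df" and bounded_linear_Dg: "bounded_linear Dg"
  using f_differentiable g_differentiable
  by (auto dest!: frechet_derivative_works[THEN iffD1] has_derivative_bounded_linear)

lemma onorm_nonneg: "0 \<le> onorm Df" "0 \<le> onorm Dg" "0 \<le> onorm (Df \<circ> Dg)"
  using bounded_linear_Df bounded_linear_Dg
  by (auto intro: onorm_pos_le bounded_linear_compose[of Df Dg, unfolded o_def[symmetric]])

lemma quad_err_nonneg: "0 \<le> quad_err"
  unfolding quad_err_def using onorm_nonneg constants_pos K_pos by simp

lemma mem_U_if_near: "norm (p - xs) < \<rho>0 \<Longrightarrow> p \<in> U"
  using ball_in_U(2) by (auto simp: dist_norm norm_minus_commute)

lemma closest_point_in_\<Sigma>: "p \<in> U \<Longrightarrow> closest_point \<Sigma> p \<in> \<Sigma>"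
proof -
  assume "p \<in> U"
  then have "\<exists>y. y \<in> \<Sigma> \<and> (\<forall>z\<in>\<Sigma>. dist p y \<le> dist p z)" using projection_unique by blast
  from someI_ex[OF this] show ?thesis unfolding closest_point_def by blast
qed

lemma combination_near_xs:
  fixes x :: "nat \<Rightarrow> 'a"
  assumes e: "(\<Sum>j\<in>J. e j) = 1" "(\<Sum>j\<in>J. \<bar>e j\<bar>) \<le> S"
    and x: "\<forall>j\<in>J. norm (x j - xs) \<le> \<Delta>" "0 \<le> \<Delta>" and small: "S * \<Delta> < \<rho>0"
  shows "\<forall>j\<in>J. x j \<in> U" "(\<Sum>j\<in>J. e j *\<^sub>R x j) \<in> U" "norm ((\<Sum>j\<in>J. e j *\<^sub>R x j) - xs) \<le> S * \<Delta>"
proof -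
  have "\<Delta> \<le> S * \<Delta>" using sum_abs_ge_1[OF e] x(2) by (simp add: mult_le_cancel_right1)
  then show "\<forall>j\<in>J. x j \<in> U" using x small mem_U_if_near by force
  show near: "norm ((\<Sum>j\<in>J. e j *\<^sub>R x j) - xs) \<le> S * \<Delta>"
    unfolding affine_combination_diff[OF e(1)] using x by (intro norm_sum_scaleR_le[OF _ e(2)]) auto
  then show "(\<Sum>j\<in>J. e j *\<^sub>R x j) \<in> U" using small mem_U_if_near by simp
qed

lemma near_tangent_space:
  assumes "z \<in> U" "z \<in> \<Sigma>"
  shows "norm ((z - xs) - closest_point (tangent_space \<Sigma> xs) (z - xs)) \<le> M / 2 * (norm (z - xs))\<^sup>2"
  using projection_taylor assms closest_point_self[of z \<Sigma>] by (force simp: algebra_simps)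

text \<open>Near \<open>xs\<close>, \<open>\<Sigma>\<close> agrees with the affine tangent space to second order, so an affine
  combination of points of \<open>\<Sigma>\<close> is within a quadratic distance of its projection onto \<open>\<Sigma>\<close>.\<close>
lemma projection_of_combination:
  fixes x :: "nat \<Rightarrow> 'a"
  assumes e: "(\<Sum>j\<in>J. e j) = 1" "(\<Sum>j\<in>J. \<bar>e j\<bar>) \<le> S"
    and x: "\<forall>j\<in>J. x j \<in> \<Sigma> \<and> norm (x j - xs) \<le> \<Delta>" "0 \<le> \<Delta>" and small: "S * \<Delta> < \<rho>0"
  defines "y \<equiv> \<Sum>j\<in>J. e j *\<^sub>R x j"
  shows "norm (closest_point \<Sigma> y - y) \<le> M * (S * \<Delta>)\<^sup>2"
proof -
  define T where "T = tangent_space \<Sigma> xs"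
  define P where "P = closest_point T"
  have "\<forall>j\<in>J. norm (x j - xs) \<le> \<Delta>" using x(1) by blast
  note near = combination_near_xs[OF e this x(2) small, folded y_def]
  have T: "closed T" "T \<noteq> {}" "subspace T"
    using tangent_subspace closed_subspace subspace_0 unfolding T_def by blast+
  have "norm (closest_point \<Sigma> y - (xs + P (y - xs))) \<le> M/2 * (norm (y - xs))\<^sup>2"
    using projection_taylor near(2) unfolding P_def T_def by blast
  also have "\<dots> \<le> M/2 * (S * \<Delta>)\<^sup>2"
    using near(3) constants_pos by (intro mult_left_mono power_mono) auto
  finally have proj_y: "norm (closest_point \<Sigma> y - (xs + P (y - xs))) \<le> M/2 * (S * \<Delta>)\<^sup>2" .
  have "norm ((x j - xs) - P (x j - xs)) \<le> M/2 * \<Delta>\<^sup>2" if "j \<in> J" for j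
    using near_tangent_space[of "x j"] near(1) x that constants_pos unfolding P_def T_def
    by (meson mult_left_mono norm_ge_zero order_trans power_mono half_gt_zero less_imp_le)
  then have "norm (\<Sum>j\<in>J. e j *\<^sub>R ((x j - xs) - P (x j - xs))) \<le> S * (M/2 * \<Delta>\<^sup>2)"
    using constants_pos by (intro norm_sum_scaleR_le[OF _ e(2)]) auto
  moreover have "(\<Sum>j\<in>J. e j *\<^sub>R ((x j - xs) - P (x j - xs))) =
      (y - xs) - (\<Sum>j\<in>J. e j *\<^sub>R P (x j - xs))"
    unfolding y_def affine_combination_diff[OF e(1), of x xs]
    by (simp only: scaleR_diff_right sum_subtractf)
  ultimately have "norm ((y - xs) - (\<Sum>j\<in>J. e j *\<^sub>R P (x j - xs))) \<le> S * (M/2 * \<Delta>\<^sup>2)" by simp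
  moreover have "(\<Sum>j\<in>J. e j *\<^sub>R P (x j - xs)) \<in> T"
    using T closest_point_in_set[OF T(1,2)] unfolding P_def
    by (intro subspace_sum subspace_scale) auto
  then have "norm ((y - xs) - P (y - xs)) \<le> norm ((y - xs) - (\<Sum>j\<in>J. e j *\<^sub>R P (x j - xs)))"
    using closest_point_le[OF T(1)] unfolding P_def by (simp add: dist_norm)
  moreover note proj_y
  moreover have "S * (M/2 * \<Delta>\<^sup>2) \<le> M/2 * (S * \<Delta>)\<^sup>2"
    using sum_abs_ge_1[OF e] constants_pos x(2)
    by (simp add: power2_eq_square mult_le_cancel_right1 mult.left_commute mult_left_mono)
  moreover have
    "closest_point \<Sigma> y - y = (closest_point \<Sigma> y - (xs + P (y - xs))) - ((y - xs) - P (y - xs))"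
    by (simp add: algebra_simps)
  ultimately show ?thesis
    using norm_triangle_ineq4[of "closest_point \<Sigma> y - (xs + P (y - xs))" "(y - xs) - P (y - xs)"]
    by simp
qed

lemma norm_f_le_near:
  assumes "y \<in> U" "z \<in> U" "norm (y - z) \<le> d"
  shows "norm (f y) \<le> norm (f z) + 2 * onorm Df * d"
proof -
  have "norm (f y - f z) \<le> 2 * onorm Df * norm (y - z)" using lipschitz assms(1,2) by blast
  also have "\<dots> \<le> 2 * onorm Df * d" using assms(3) onorm_nonneg by (simp add: mult_left_mono)
  finally show ?thesis using norm_triangle_ineq2[of "f y" "f z"] by linarith
qed

lemma norm_f_g_le_near:
  assumes "y \<in> U" "z \<in> U" "norm (y - z) \<le> d"
  shows "norm (f (g y)) \<le> norm (f (g z)) + 2 * onorm (Df \<circ> Dg) * d"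
proof -
  have "norm (f (g y) - f (g z)) \<le> 2 * onorm (Df \<circ> Dg) * norm (y - z)" using lipschitz assms(1,2)
    by blast
  also have "\<dots> \<le> 2 * onorm (Df \<circ> Dg) * d" using assms(3) onorm_nonneg by (simp add: mult_left_mono)
  finally show ?thesis using norm_triangle_ineq2[of "f (g y)" "f (g z)"] by linarith
qed

lemma g_near_xs:
  assumes "y \<in> U" "norm (y - xs) \<le> t"
  shows "norm (g y - xs) \<le> onorm Dg * t + L' / 2 * t\<^sup>2"
proof -
  have "norm (Dg (y - xs)) \<le> onorm Dg * t"
    using onorm[OF bounded_linear_Dg, of "y - xs"] assms(2) onorm_nonneg
    by (meson mult_left_mono order_trans)
  moreover have "norm (g y - xs - Dg (y - xs)) \<le> L' / 2 * t\<^sup>2"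
    using taylor assms constants_pos
    by (meson mult_left_mono norm_ge_zero order_trans power_mono half_gt_zero less_imp_le)
  ultimately show ?thesis using norm_triangle_sub[of "g y - xs" "Dg (y - xs)"] by linarith
qed

context
  fixes x :: "nat \<Rightarrow> 'a" and e :: "nat \<Rightarrow> real" and J S \<Delta>
  assumes e: "(\<Sum>j\<in>J. e j) = 1" "(\<Sum>j\<in>J. \<bar>e j\<bar>) \<le> S"
    and x: "\<forall>j\<in>J. norm (x j - xs) \<le> \<Delta>" "0 \<le> \<Delta>" and small: "S * \<Delta> < \<rho>0"
begin

lemma norm_f_combination_le:
  "norm (f (\<Sum>j\<in>J. e j *\<^sub>R x j)) \<le> norm (\<Sum>j\<in>J. e j *\<^sub>R f (x j)) + L * (S * \<Delta>)\<^sup>2"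
proof -
  have "\<forall>z\<in>U. norm (f z - 0 - Df (z - xs)) \<le> L / 2 * (norm (z - xs))\<^sup>2" using taylor by simp
  from taylor_affine_combination[OF _ _ this e]
  have "norm (f (\<Sum>j\<in>J. e j *\<^sub>R x j) - (\<Sum>j\<in>J. e j *\<^sub>R f (x j))) \<le> L * (S * \<Delta>)\<^sup>2"
    using combination_near_xs[OF e x small] x(1,2) constants_pos bounded_linear_Df
    by (simp add: bounded_linear.linear)
  then show ?thesis
    using norm_triangle_ineq2[of "f (\<Sum>j\<in>J. e j *\<^sub>R x j)" "\<Sum>j\<in>J. e j *\<^sub>R f (x j)"] by linarith
qed

lemma g_combination_error:
  "norm (g (\<Sum>j\<in>J. e j *\<^sub>R x j) - (\<Sum>j\<in>J. e j *\<^sub>R g (x j))) \<le> L' * (S * \<Delta>)\<^sup>2"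
proof -
  have "\<forall>z\<in>U. norm (g z - xs - Dg (z - xs)) \<le> L' / 2 * (norm (z - xs))\<^sup>2" using taylor by simp
  from taylor_affine_combination[OF _ _ this e]
  show ?thesis using combination_near_xs[OF e x small] x(1,2) constants_pos bounded_linear_Dg
    by (simp add: bounded_linear.linear)
qed

lemma step_P:
  assumes x_\<Sigma>: "\<forall>j\<in>J. x j \<in> \<Sigma>"
  defines "y \<equiv> \<Sum>j\<in>J. e j *\<^sub>R x j"
  shows "y \<in> U" "g y \<in> V \<inter> \<Sigma>"
    "norm (f (g y)) \<le> K * norm (\<Sum>j\<in>J. e j *\<^sub>R f (x j)) + quad_err * (S * \<Delta>)\<^sup>2"
proof -
  define X where "X = (S * \<Delta>)\<^sup>2"
  define z where "z = closest_point \<Sigma> y"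
  show yU: "y \<in> U" unfolding y_def by (rule combination_near_xs(2)[OF e x small])
  then show "g y \<in> V \<inter> \<Sigma>" using U_subset g_into_\<Sigma> by blast
  have zU: "z \<in> U" "z \<in> \<Sigma>" using projection_unique closest_point_in_\<Sigma> yU by (auto simp: z_def)
  have zy: "norm (z - y) \<le> M * X"
    unfolding z_def y_def X_def using x_\<Sigma> x
    by (intro projection_of_combination[OF e _ x(2) small]) auto
  have "norm (f z) \<le> norm (\<Sum>j\<in>J. e j *\<^sub>R f (x j)) + L * X + 2 * onorm Df * (M * X)"
    using norm_f_le_near[OF zU(1) yU zy] norm_f_combination_le unfolding y_def X_def by linarith
  then have "K * norm (f z) \<le> K * (norm (\<Sum>j\<in>J. e j *\<^sub>R f (x j)) + L * X + 2 * onorm Df * (M * X))"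
    using K_pos by (intro mult_left_mono) auto
  moreover have "norm (f (g z)) \<le> K * norm (f z)" using contraction zU U_subset by blast
  ultimately have "norm (f (g y)) \<le>
      K * (norm (\<Sum>j\<in>J. e j *\<^sub>R f (x j)) + L * X + 2 * onorm Df * (M * X)) +
      2 * onorm (Df \<circ> Dg) * (M * X)"
    using norm_f_g_le_near[OF yU zU(1), of "M * X"] zy by (simp add: norm_minus_commute)
  also have "\<dots> \<le> K * norm (\<Sum>j\<in>J. e j *\<^sub>R f (x j)) + quad_err * X"
    using onorm_nonneg constants_pos by (simp add: quad_err_def X_def algebra_simps)
  finally show "norm (f (g y)) \<le> K * norm (\<Sum>j\<in>J. e j *\<^sub>R f (x j)) + quad_err * X" .
qed

lemma step_A:
  assumes \<Sigma>: "\<Sigma> = UNIV"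
    and small_A: "S * \<Delta> \<le> 1" "(onorm Dg + 2 * L' + 1) * (S * \<Delta>) < \<rho>0"
  defines "w \<equiv> \<Sum>j\<in>J. e j *\<^sub>R g (x j)"
  shows "w \<in> V" "norm (f w) \<le> K * norm (\<Sum>j\<in>J. e j *\<^sub>R f (x j)) + quad_err * (S * \<Delta>)\<^sup>2"
proof -
  define y where "y = (\<Sum>j\<in>J. e j *\<^sub>R x j)"
  define X where "X = (S * \<Delta>)\<^sup>2"
  have S\<Delta>: "0 \<le> S * \<Delta>" using sum_abs_ge_1[OF e] x(2) by simp
  have X: "0 \<le> X" "X \<le> S * \<Delta>"
    using small_A(1) S\<Delta> by (auto simp: X_def power2_eq_square mult_left_le)
  then have LX: "0 \<le> L' * X" "L' * X \<le> L' * (S * \<Delta>)" using constants_pos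
    by (auto intro: mult_left_mono)
  note near = combination_near_xs[OF e x small, folded y_def]
  have wgy: "norm (w - g y) \<le> L' * X"
    using g_combination_error by (simp add: w_def y_def X_def norm_minus_commute)
  have gy: "norm (g y - xs) \<le> onorm Dg * (S * \<Delta>) + (L' * X) / 2"
    using g_near_xs[OF near(2,3)] by (simp add: X_def)
  have "(onorm Dg + 2 * L' + 1) * (S * \<Delta>) = onorm Dg * (S * \<Delta>) + 2 * (L' * (S * \<Delta>)) + S * \<Delta>"
    by (simp add: algebra_simps)
  then have radius: "onorm Dg * (S * \<Delta>) + 2 * (L' * X) + S * \<Delta> < \<rho>0" using small_A(2) LX by linarith
  then have gyU: "g y \<in> U" using gy LX S\<Delta> mem_U_if_near by simp
  have "norm (w - xs) \<le> norm (w - g y) + norm (g y - xs)"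
    using norm_triangle_ineq[of "w - g y" "g y - xs"] by simp
  then have wU: "w \<in> U" using wgy gy radius S\<Delta> LX mem_U_if_near by simp
  then show "w \<in> V" using U_subset by blast
  have "norm (f (g y)) \<le> K * norm (f y)" using contraction near(2) U_subset \<Sigma> by blast
  also have "\<dots> \<le> K * (norm (\<Sum>j\<in>J. e j *\<^sub>R f (x j)) + L * X)"
    using norm_f_combination_le K_pos unfolding y_def X_def by (intro mult_left_mono) auto
  finally have "norm (f w) \<le> K * (norm (\<Sum>j\<in>J. e j *\<^sub>R f (x j)) + L * X) + 2 * onorm Df * (L' * X)"
    using norm_f_le_near[OF wU gyU wgy] by linarith
  also have "\<dots> \<le> K * norm (\<Sum>j\<in>J. e j *\<^sub>R f (x j)) + quad_err * X"
    using onorm_nonneg constants_pos K_pos X by (simp add: quad_err_def algebra_simps)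
  finally show "norm (f w) \<le> K * norm (\<Sum>j\<in>J. e j *\<^sub>R f (x j)) + quad_err * X" .
qed

end

end

section \<open>Runs of the accelerated iteration\<close>

definition coeff_sum_bound :: "real \<Rightarrow> nat \<Rightarrow> real" where
  "coeff_sum_bound \<mu> n = 4 * (3 / (1 - \<mu>)) ^ n"

lemma three_div_ge_1: "0 \<le> (\<mu>::real) \<Longrightarrow> \<mu> < 1 \<Longrightarrow> 1 \<le> 3 / (1 - \<mu>)"
  by (simp add: field_simps)

lemma coeff_sum_bound_ge_1: "0 \<le> \<mu> \<Longrightarrow> \<mu> < 1 \<Longrightarrow> 1 \<le> coeff_sum_bound \<mu> n"
proof -
  assume "0 \<le> \<mu>" "\<mu> < 1"
  then have "1 \<le> (3 / (1 - \<mu>)) ^ n" by (intro one_le_power three_div_ge_1)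
  then show ?thesis unfolding coeff_sum_bound_def by simp
qed

lemma coeff_sum_bound_mono:
  "0 \<le> \<mu> \<Longrightarrow> \<mu> < 1 \<Longrightarrow> m \<le> n \<Longrightarrow> coeff_sum_bound \<mu> m \<le> coeff_sum_bound \<mu> n"
  unfolding coeff_sum_bound_def by (simp add: power_increasing three_div_ge_1)

lemma one_plus_power_le:
  fixes a :: real
  assumes "0 \<le> a"
  shows "(1 + a) ^ n \<le> 2 ^ n * (1 + a ^ n)"
proof (cases "a \<le> 1")
  case True
  then have "(1 + a) ^ n \<le> 2 ^ n" using assms by (intro power_mono) auto
  also have "\<dots> \<le> 2 ^ n * (1 + a ^ n)" using assms by simp
  finally show ?thesis .
next
  case False
  then have "(1 + a) ^ n \<le> (2 * a) ^ n" using assms by (intro power_mono) auto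
  also have "\<dots> \<le> 2 ^ n * (1 + a ^ n)" by (simp add: power_mult_distrib)
  finally show ?thesis .
qed

lemma coeff_sum_bound_le:
  assumes "0 \<le> \<mu>" "\<mu> < 1"
  shows "coeff_sum_bound \<mu> n \<le> 4 * 6 ^ n * (1 + (\<mu> / (1 - \<mu>)) ^ n)"
proof -
  have eq: "3 / (1 - \<mu>) = 3 * (1 + \<mu> / (1 - \<mu>))" using assms by (simp add: field_simps)
  have "coeff_sum_bound \<mu> n = 4 * 3 ^ n * (1 + \<mu> / (1 - \<mu>)) ^ n"
    unfolding coeff_sum_bound_def eq power_mult_distrib by simp
  also have "\<dots> \<le> 4 * 3 ^ n * (2 ^ n * (1 + (\<mu> / (1 - \<mu>)) ^ n))"
    using assms by (intro mult_left_mono one_plus_power_le) auto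
  also have "\<dots> = 4 * 6 ^ n * (1 + (\<mu> / (1 - \<mu>)) ^ n)"
    by (simp add: power_mult_distrib[symmetric])
  finally show ?thesis .
qed

context anderson_setting
begin

definition admissible_radius :: "real \<Rightarrow> real \<Rightarrow> bool" where
  "admissible_radius \<mu> c \<longleftrightarrow> 0 < c \<and>
     coeff_sum_bound \<mu> DIM('b) * c / \<sigma> \<le> 1 \<and>
     (onorm Dg + 2 * L' + 1) * (coeff_sum_bound \<mu> DIM('b) * c / \<sigma>) < \<rho>0 \<and>
     quad_err * (coeff_sum_bound \<mu> DIM('b))\<^sup>2 * c / \<sigma>\<^sup>2 \<le> \<mu> - K"

lemma admissible_radius_exists:
  assumes "K < \<mu>"
  shows "\<exists>c. admissible_radius \<mu> c"
proof -
  define S where "S = coeff_sum_bound \<mu> DIM('b)"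
  have lim: "((\<lambda>c. a * c) \<longlongrightarrow> 0) (at_right 0)" for a :: real
    by (auto intro!: tendsto_eq_intros)
  have "eventually (\<lambda>c. 0 < c) (at_right (0::real))" by (simp add: eventually_at_right_less)
  moreover have "eventually (\<lambda>c. (S / \<sigma>) * c < 1) (at_right 0)"
    by (rule order_tendstoD(2)[OF lim]) simp
  moreover have "eventually (\<lambda>c. ((onorm Dg + 2 * L' + 1) * S / \<sigma>) * c < \<rho>0) (at_right 0)"
    by (rule order_tendstoD(2)[OF lim]) (simp add: ball_in_U)
  moreover have "eventually (\<lambda>c. (quad_err * S\<^sup>2 / \<sigma>\<^sup>2) * c < \<mu> - K) (at_right 0)"
    by (rule order_tendstoD(2)[OF lim]) (simp add: assms)
  ultimately have "eventually (\<lambda>c. admissible_radius \<mu> c) (at_right 0)"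
    by eventually_elim (auto simp: admissible_radius_def S_def[symmetric] less_imp_le)
  then show ?thesis using eventually_happens' trivial_limit_at_right_real by blast
qed

end

locale anderson_run = anderson_setting +
  fixes \<mu> \<delta> c\<mu> :: real and vP :: bool and x :: "nat \<Rightarrow> 'a" and r :: "nat \<Rightarrow> 'b"
    and m :: "nat \<Rightarrow> nat" and c :: "nat \<Rightarrow> nat \<Rightarrow> real"
  assumes \<mu>: "K < \<mu>" "\<mu> < 1" and \<delta>: "0 < \<delta>" "\<delta> < K"
    and version: "vP \<or> \<Sigma> = UNIV"
    and start: "x 0 \<in> U \<inter> \<Sigma>" "0 < norm (r 0)" "norm (r 0) \<le> c\<mu> * \<delta>\<^sup>2"
    and radius: "admissible_radius \<mu> c\<mu>"
    and run: "AAP_run vP f g \<delta> x r m c"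
begin

lemma \<mu>_nonneg: "0 \<le> \<mu>"
  using \<mu> K_pos by simp

lemma residual: "r k = f (x k)" and depth_0: "m 0 = 0"
  using run unfolding AAP_run_def by auto

lemma stopped: "r k = 0 \<Longrightarrow> k \<le> j \<Longrightarrow> x j = x k \<and> r j = 0 \<and> m j = 0"
  using run unfolding AAP_run_def by blast

lemma step_rule:
  assumes "\<forall>j\<le>k. r j \<noteq> 0"
  shows "if m k = 0 then c k 0 = 1 \<and> x (Suc k) = g (x k)
         else is_LS_min r k (m k) (c k) \<and>
              x (Suc k) = (if vP then g (\<Sum>i\<le>m k. c k i *\<^sub>R x (k - m k + i))
                           else (\<Sum>i\<le>m k. c k i *\<^sub>R g (x (k - m k + i))))"
    and "m (Suc k) = (GREATEST mm. mm \<le> m k + 1 \<and>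
                       (\<forall>i. Suc k - mm \<le> i \<and> i \<le> k \<longrightarrow> \<delta> * norm (r i) < norm (r (Suc k))))"
  using run assms unfolding AAP_run_def by blast+

lemma nonzero_prefix: "r k \<noteq> 0 \<Longrightarrow> \<forall>j\<le>k. r j \<noteq> 0"
  using stopped by blast

lemma depth_Suc:
  assumes nz: "\<forall>j\<le>k. r j \<noteq> 0"
  shows "m (Suc k) \<le> m k + 1"
    and "\<And>i. Suc k - m (Suc k) \<le> i \<Longrightarrow> i \<le> k \<Longrightarrow> \<delta> * norm (r i) < norm (r (Suc k))"
    and "m (Suc k) \<le> m k \<Longrightarrow> m (Suc k) \<le> k \<and> norm (r (Suc k)) \<le> \<delta> * norm (r (k - m (Suc k)))"
proof -
  define P where "P mm \<longleftrightarrow> mm \<le> m k + 1 \<and>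
                       (\<forall>i. Suc k - mm \<le> i \<and> i \<le> k \<longrightarrow> \<delta> * norm (r i) < norm (r (Suc k)))" for mm
  have eq: "m (Suc k) = Greatest P" using step_rule(2)[OF nz] unfolding P_def by simp
  have bound: "P mm \<Longrightarrow> mm \<le> m k + 1" for mm unfolding P_def by auto
  have "P (m (Suc k))" unfolding eq
    by (rule GreatestI_nat[of P 0 "m k + 1"]) (auto simp: P_def bound)
  then show "m (Suc k) \<le> m k + 1"
    and window: "\<And>i. Suc k - m (Suc k) \<le> i \<Longrightarrow> i \<le> k \<Longrightarrow> \<delta> * norm (r i) < norm (r (Suc k))"
    unfolding P_def by auto
  assume "m (Suc k) \<le> m k"
  \<comment> \<open>maximality: the window cannot be extended by one more residual\<close>
  have "\<not> P (m (Suc k) + 1)"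
    using Greatest_le_nat[of P _ "m k + 1", OF _ bound] unfolding eq[symmetric] by fastforce
  then obtain i where "Suc k - (m (Suc k) + 1) \<le> i" "i \<le> k" "\<not> \<delta> * norm (r i) < norm (r (Suc k))"
    using \<open>m (Suc k) \<le> m k\<close> unfolding P_def by auto
  moreover from this window have "\<not> Suc k - m (Suc k) \<le> i" by blast
  ultimately have "m (Suc k) \<le> k" "i = k - m (Suc k)" by auto
  with \<open>\<not> \<delta> * norm (r i) < norm (r (Suc k))\<close>
  show "m (Suc k) \<le> k \<and> norm (r (Suc k)) \<le> \<delta> * norm (r (k - m (Suc k)))" by simp
qed

lemma depth_le: "m k \<le> k"
proof (induction k)
  case (Suc k)
  show ?case
  proof (cases "\<forall>j\<le>k. r j \<noteq> 0")
    case True then show ?thesis using depth_Suc(1)[OF True] Suc by simp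
  next
    case False then show ?thesis using stopped[of _ "Suc k"] by fastforce
  qed
qed (simp add: depth_0)

lemma residual_antimono:
  assumes "\<forall>j<n. norm (r (Suc j)) \<le> \<mu> * norm (r j)" "i \<le> j" "j \<le> n"
  shows "norm (r j) \<le> norm (r i)"
  using assms(2,3)
proof (induction j)
  case (Suc j)
  show ?case
  proof (cases "i = Suc j")
    case False
    then have "norm (r j) \<le> norm (r i)" using Suc by simp
    moreover have "norm (r (Suc j)) \<le> \<mu> * norm (r j)" using assms(1) Suc by simp
    moreover have "\<mu> * norm (r j) \<le> norm (r j)" using \<mu> \<mu>_nonneg by (intro mult_left_le_one_le) auto
    ultimately show ?thesis by linarith
  qed simp
qed simp

definition hull_decay :: "nat \<Rightarrow> bool" where
  "hull_decay k \<longleftrightarrow> (\<forall>j. k - m k < j \<and> j \<le> k \<longrightarrow>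
     (\<forall>h\<in>affine hull (r ` {k - m k..j - 1}). norm (r j) \<le> \<mu> * norm h))"

lemma hull_decay_window:
  assumes "\<forall>j\<le>k. r j \<noteq> 0" "hull_decay k"
  shows "decreasing_window \<mu> r (k - m k) (m k)"
  unfolding decreasing_window_def
proof (intro conjI allI impI ballI)
  fix j assume "j \<le> m k"
  then show "r (k - m k + j) \<noteq> 0" using assms(1) depth_le[of k] by simp
next
  fix j h assume j: "j \<in> {1..m k}" and h: "h \<in> affine hull (r ` {k - m k..k - m k + (j - 1)})"
  have "k - m k < k - m k + j" "k - m k + j \<le> k" using j depth_le[of k] by auto
  then have "\<forall>h\<in>affine hull (r ` {k - m k..k - m k + j - 1}). norm (r (k - m k + j)) \<le> \<mu> * norm h"
    using assms(2) unfolding hull_decay_def by blast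
  moreover have "k - m k + j - 1 = k - m k + (j - 1)" using j by auto
  ultimately show "norm (r (k - m k + j)) \<le> \<mu> * norm h" using h by simp
qed

lemma small_residual_radius:
  assumes t: "0 \<le> t" "t \<le> norm (r 0)"
  defines "S \<equiv> coeff_sum_bound \<mu> DIM('b)"
  shows "S * (t / \<sigma>) \<le> 1" "(onorm Dg + 2 * L' + 1) * (S * (t / \<sigma>)) < \<rho>0" "S * (t / \<sigma>) < \<rho>0"
    "quad_err * (S * (t / \<sigma>))\<^sup>2 \<le> (\<mu> - K) * \<delta>\<^sup>2 * t"
proof -
  define N where "N = onorm Dg + 2 * L' + 1"
  have c: "0 < c\<mu>" "S * c\<mu> / \<sigma> \<le> 1" "N * (S * c\<mu> / \<sigma>) < \<rho>0" "quad_err * S\<^sup>2 * c\<mu> / \<sigma>\<^sup>2 \<le> \<mu> - K"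
    using radius unfolding admissible_radius_def S_def N_def by auto
  have S: "1 \<le> S" unfolding S_def using coeff_sum_bound_ge_1[OF \<mu>_nonneg \<mu>(2)] .
  have N: "1 \<le> N" unfolding N_def using onorm_nonneg constants_pos by simp
  have "\<delta>\<^sup>2 \<le> 1" using \<delta> K_pos \<mu> by (intro power_le_one) auto
  then have "t \<le> c\<mu>" using t start(3) c(1) by (smt (verit) mult_left_le)
  then have St: "S * (t / \<sigma>) \<le> S * c\<mu> / \<sigma>"
    using S \<sigma>_pos by (simp add: divide_right_mono mult_left_mono)
  then show "S * (t / \<sigma>) \<le> 1" using c(2) by simp
  have "N * (S * (t / \<sigma>)) \<le> N * (S * c\<mu> / \<sigma>)" using St N by (intro mult_left_mono) auto
  then show "N * (S * (t / \<sigma>)) < \<rho>0" using c(3) by simp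
  moreover have "S * (t / \<sigma>) \<le> N * (S * (t / \<sigma>))"
    using mult_right_mono[OF N, of "S * (t / \<sigma>)"] S t \<sigma>_pos by simp
  ultimately show "S * (t / \<sigma>) < \<rho>0" by simp
  have "quad_err * (S * (t / \<sigma>))\<^sup>2 = (quad_err * S\<^sup>2 * t / \<sigma>\<^sup>2) * t"
    by (simp add: power2_eq_square field_simps)
  also have "\<dots> \<le> (quad_err * S\<^sup>2 * (c\<mu> * \<delta>\<^sup>2) / \<sigma>\<^sup>2) * t"
    using t start(3) quad_err_nonneg
    by (intro mult_right_mono divide_right_mono mult_left_mono) auto
  also have "\<dots> = (quad_err * S\<^sup>2 * c\<mu> / \<sigma>\<^sup>2) * \<delta>\<^sup>2 * t" by simp
  also have "\<dots> \<le> (\<mu> - K) * \<delta>\<^sup>2 * t" using c(4) t by (intro mult_right_mono) auto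
  finally show "quad_err * (S * (t / \<sigma>))\<^sup>2 \<le> (\<mu> - K) * \<delta>\<^sup>2 * t" .
qed

definition run_invariant :: "nat \<Rightarrow> bool" where
  "run_invariant k \<longleftrightarrow> (\<forall>j\<le>k. x j \<in> U \<inter> \<Sigma> \<and> norm (x j - xs) \<le> norm (r j) / \<sigma>) \<and>
     (\<forall>j<k. norm (r (Suc j)) \<le> \<mu> * norm (r j)) \<and> hull_decay k"

lemma near_xs_if_small_residual:
  assumes "norm (r j) \<le> norm (r 0)" "x j \<in> V \<inter> \<Sigma>"
  shows "x j \<in> U \<inter> \<Sigma>" "norm (x j - xs) \<le> norm (r j) / \<sigma>"
proof -
  have "\<sigma> * norm (x j - xs) \<le> norm (r j)" using error_le_residual assms(2) residual by simp
  then show near: "norm (x j - xs) \<le> norm (r j) / \<sigma>" using \<sigma>_pos by (simp add: field_simps)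
  have "norm (r j) / \<sigma> \<le> coeff_sum_bound \<mu> DIM('b) * (norm (r j) / \<sigma>)"
    using mult_right_mono[OF coeff_sum_bound_ge_1[OF \<mu>_nonneg \<mu>(2)], of "norm (r j) / \<sigma>"] \<sigma>_pos
    by simp
  then have "norm (x j - xs) < \<rho>0" using near small_residual_radius(3)[OF norm_ge_zero assms(1)]
    by simp
  then show "x j \<in> U \<inter> \<Sigma>" using mem_U_if_near assms(2) by blast
qed

lemma window_start_small:
  assumes "\<forall>j\<le>k. r j \<noteq> 0" "0 < m k"
  shows "\<delta> * norm (r (k - m k)) < norm (r k)"
proof -
  obtain k' where k: "k = Suc k'" using assms(2) depth_le[of k] by (cases k) auto
  have "m k \<le> m k' + 1" using depth_Suc(1)[of k'] assms(1) k by simp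
  then show ?thesis using depth_Suc(2)[of k' "k - m k"] assms k by simp
qed

lemma invariant_residual_antimono:
  "run_invariant k \<Longrightarrow> i \<le> j \<Longrightarrow> j \<le> k \<Longrightarrow> norm (r j) \<le> norm (r i)"
  using residual_antimono unfolding run_invariant_def by blast

lemma window_near_xs:
  assumes "run_invariant k" "a \<le> j" "j \<le> k"
  shows "x j \<in> \<Sigma>" "norm (x j - xs) \<le> norm (r a) / \<sigma>"
proof -
  have "norm (x j - xs) \<le> norm (r j) / \<sigma>" "x j \<in> \<Sigma>"
    using assms(1,3) unfolding run_invariant_def by auto
  moreover have "norm (r j) / \<sigma> \<le> norm (r a) / \<sigma>"
    using invariant_residual_antimono[OF assms] \<sigma>_pos by (simp add: divide_right_mono)
  ultimately show "x j \<in> \<Sigma>" "norm (x j - xs) \<le> norm (r a) / \<sigma>" by simp_all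
qed

lemma depth_window:
  assumes nz: "\<forall>j\<le>k. r j \<noteq> 0" and inv: "run_invariant k" and "0 < m k"
  shows "is_LS_min r (k - m k + m k) (m k) (c k)" "decreasing_window \<mu> r (k - m k) (m k)"
    "(\<Sum>i\<le>m k. \<bar>c k i\<bar>) \<le> coeff_sum_bound \<mu> DIM('b)"
proof -
  show LS: "is_LS_min r (k - m k + m k) (m k) (c k)"
    using step_rule(1)[OF nz] assms(3) depth_le[of k] by (simp split: if_splits)
  show window: "decreasing_window \<mu> r (k - m k) (m k)"
    using hull_decay_window[OF nz] inv unfolding run_invariant_def by blast
  have "(\<Sum>i\<le>m k. \<bar>c k i\<bar>) \<le> coeff_sum_bound \<mu> (m k)"
    using decreasing_window_LS_coeff_bound[OF \<mu>_nonneg \<mu>(2) window LS]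
    unfolding coeff_sum_bound_def by simp
  also have "\<dots> \<le> coeff_sum_bound \<mu> DIM('b)"
    using coeff_sum_bound_mono[OF \<mu>_nonneg \<mu>(2) decreasing_window_le_DIM[OF \<mu>_nonneg \<mu>(2) window]] .
  finally show "(\<Sum>i\<le>m k. \<bar>c k i\<bar>) \<le> coeff_sum_bound \<mu> DIM('b)" .
qed

lemma accelerated_step:
  assumes nz: "\<forall>j\<le>k. r j \<noteq> 0" and inv: "run_invariant k" and depth: "0 < m k"
  defines "a \<equiv> k - m k"
  shows "x (Suc k) \<in> V \<inter> \<Sigma>"
    "norm (r (Suc k)) \<le> K * norm (\<Sum>i\<le>m k. c k i *\<^sub>R r (a + i)) + (\<mu> - K) * \<delta>\<^sup>2 * norm (r a)"
    "vP \<Longrightarrow> (\<Sum>i\<le>m k. c k i *\<^sub>R x (a + i)) \<in> V"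
proof -
  define J where "J = {a..a + m k}"
  define e where "e j = c k (j - a)" for j
  define \<Delta> where "\<Delta> = norm (r a) / \<sigma>"
  define S where "S = coeff_sum_bound \<mu> DIM('b)"
  have k: "k = a + m k" using depth_le[of k] by (simp add: a_def)
  note LS = depth_window[OF assms(1-3), folded a_def S_def]
  have combination: "(\<Sum>i\<le>m k. c k i *\<^sub>R v (a + i)) = (\<Sum>j\<in>J. e j *\<^sub>R v j)"
    for v :: "nat \<Rightarrow> 'c::real_vector"
    unfolding e_def J_def by (rule combination_atMost_shift)
  have e: "(\<Sum>j\<in>J. e j) = 1" "(\<Sum>j\<in>J. \<bar>e j\<bar>) \<le> S"
    using LS(1,3) unfolding is_LS_min_def e_def J_def sum_atMost_shift[where a = a] by auto
  have ra: "norm (r a) \<le> norm (r 0)" using invariant_residual_antimono[OF inv] by (simp add: a_def)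
  have x: "\<forall>j\<in>J. x j \<in> \<Sigma> \<and> norm (x j - xs) \<le> \<Delta>"
    using window_near_xs[OF inv] k unfolding J_def \<Delta>_def by auto
  then have x_near: "\<forall>j\<in>J. norm (x j - xs) \<le> \<Delta>" by blast
  have \<Delta>: "0 \<le> \<Delta>" using \<sigma>_pos by (simp add: \<Delta>_def)
  note small = small_residual_radius[OF norm_ge_zero ra, folded \<Delta>_def S_def]
  have step: "x (Suc k) \<in> V \<inter> \<Sigma> \<and>
      norm (r (Suc k)) \<le> K * norm (\<Sum>j\<in>J. e j *\<^sub>R f (x j)) + quad_err * (S * \<Delta>)\<^sup>2 \<and>
      (vP \<longrightarrow> (\<Sum>j\<in>J. e j *\<^sub>R x j) \<in> V)"
  proof (cases vP)
    case True
    then have "x (Suc k) = g (\<Sum>j\<in>J. e j *\<^sub>R x j)"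
      using step_rule(1)[OF nz] depth combination[of x] by (simp add: a_def)
    then show ?thesis
      using step_P[OF e x_near \<Delta> small(3)] x U_subset residual by auto
  next
    case False
    then have "x (Suc k) = (\<Sum>j\<in>J. e j *\<^sub>R g (x j))"
      using step_rule(1)[OF nz] depth combination[of "\<lambda>j. g (x j)"] by (simp add: a_def)
    then show ?thesis
      using step_A[OF e x_near \<Delta> small(3) _ small(1,2)] version False residual by auto
  qed
  then show "x (Suc k) \<in> V \<inter> \<Sigma>" "vP \<Longrightarrow> (\<Sum>i\<le>m k. c k i *\<^sub>R x (a + i)) \<in> V"
    by (auto simp: combination)
  show "norm (r (Suc k)) \<le> K * norm (\<Sum>i\<le>m k. c k i *\<^sub>R r (a + i)) + (\<mu> - K) * \<delta>\<^sup>2 * norm (r a)"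
    using step small(4) combination[of r] residual[of "Suc k"] by (simp add: residual)
qed

lemma plain_step:
  assumes nz: "\<forall>j\<le>k. r j \<noteq> 0" and inv: "run_invariant k" and depth: "m k = 0"
  shows "x (Suc k) \<in> V \<inter> \<Sigma>" "norm (r (Suc k)) \<le> \<mu> * norm (r k)"
    "1 \<le> m (Suc k) \<Longrightarrow> h \<in> affine hull (r ` {Suc k - m (Suc k)..k}) \<Longrightarrow> norm (r (Suc k)) \<le> \<mu> * norm h"
proof -
  have step: "x (Suc k) = g (x k)" using step_rule(1)[OF nz] depth by simp
  have "x k \<in> V \<inter> g -` V \<inter> \<Sigma>" using inv U_subset unfolding run_invariant_def by blast
  then show "x (Suc k) \<in> V \<inter> \<Sigma>" using step g_into_\<Sigma> by auto
  have "norm (r (Suc k)) \<le> K * norm (r k)"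
    using \<open>x k \<in> V \<inter> g -` V \<inter> \<Sigma>\<close> contraction by (simp add: residual step)
  also have "\<dots> \<le> \<mu> * norm (r k)" using \<mu>(1) by (simp add: mult_right_mono)
  finally show contracted: "norm (r (Suc k)) \<le> \<mu> * norm (r k)" .
  assume "1 \<le> m (Suc k)" "h \<in> affine hull (r ` {Suc k - m (Suc k)..k})"
  moreover have "m (Suc k) \<le> 1" using depth_Suc(1)[OF nz] depth by simp
  ultimately show "norm (r (Suc k)) \<le> \<mu> * norm h" using contracted by simp
qed

text \<open>The extrapolated residual is at most the last residual, and the remainder is controlled
  by \<open>\<delta> * norm (r (k - m k)) < norm (r k)\<close>, which holds because \<open>r (k - m k)\<close> is in the window.\<close>
lemma accelerated_contraction:
  assumes nz: "\<forall>j\<le>k. r j \<noteq> 0" and inv: "run_invariant k" and depth: "0 < m k"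
  shows "norm (r (Suc k)) \<le> \<mu> * norm (r k)"
proof -
  define a where "a = k - m k"
  have LS: "is_LS_min r (a + m k) (m k) (c k)" using depth_window(1)[OF assms] by (simp add: a_def)
  have "norm (\<Sum>i\<le>m k. c k i *\<^sub>R r (a + i)) \<le> norm (r k)"
    using is_LS_min_le[OF LS, of "{k}" "\<lambda>_. 1"] depth_le[of k] by (simp add: a_def)
  moreover have "\<delta> * (\<delta> * norm (r a)) \<le> \<delta> * norm (r a)"
    using \<delta> \<mu> by (intro mult_left_le_one_le) auto
  then have "\<delta>\<^sup>2 * norm (r a) \<le> norm (r k)"
    using window_start_small[OF nz depth] by (simp add: power2_eq_square mult.assoc a_def)
  ultimately have "K * norm (\<Sum>i\<le>m k. c k i *\<^sub>R r (a + i)) + (\<mu> - K) * (\<delta>\<^sup>2 * norm (r a))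
      \<le> K * norm (r k) + (\<mu> - K) * norm (r k)"
    using K_pos \<mu> by (intro add_mono mult_left_mono) auto
  then show "norm (r (Suc k)) \<le> \<mu> * norm (r k)"
    using accelerated_step(2)[OF assms] by (simp add: a_def mult.assoc algebra_simps)
qed

text \<open>If the depth grows, the new residual exceeds \<open>\<delta> * norm (r k)\<close>, so the remainder is
  absorbed into the margin \<open>\<mu> - K\<close> and the new residual is at most \<open>\<mu>\<close> times the least-squares
  residual, which is no longer than any affine combination of the new window.\<close>
lemma accelerated_hull_decay:
  assumes nz: "\<forall>j\<le>k. r j \<noteq> 0" and inv: "run_invariant k" and depth: "0 < m k"
    and new: "1 \<le> m (Suc k)" and h: "h \<in> affine hull (r ` {Suc k - m (Suc k)..k})"
  shows "norm (r (Suc k)) \<le> \<mu> * norm h"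
proof -
  define a where "a = k - m k"
  define \<rho> where "\<rho> = (\<Sum>i\<le>m k. c k i *\<^sub>R r (a + i))"
  have k: "k = a + m k" using depth_le[of k] by (simp add: a_def)
  have LS: "is_LS_min r (a + m k) (m k) (c k)" using depth_window(1)[OF nz inv depth]
    by (simp add: a_def)
  have "\<delta> * norm (r k) < norm (r (Suc k))" using depth_Suc(2)[OF nz, of k] new by simp
  moreover have "\<delta> * (\<delta> * norm (r a)) \<le> \<delta> * norm (r k)"
    using window_start_small[OF nz depth] \<delta>(1) by (intro mult_left_mono) (auto simp: a_def)
  ultimately have "\<delta>\<^sup>2 * norm (r a) \<le> norm (r (Suc k))" by (simp add: power2_eq_square mult.assoc)
  then have "(\<mu> - K) * (\<delta>\<^sup>2 * norm (r a)) \<le> (\<mu> - K) * norm (r (Suc k))"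
    using \<mu> by (intro mult_left_mono) auto
  then have "(1 - \<mu> + K) * norm (r (Suc k)) \<le> K * norm \<rho>"
    using accelerated_step(2)[OF nz inv depth] by (simp add: a_def \<rho>_def mult.assoc algebra_simps)
  also have "\<dots> \<le> (1 - \<mu> + K) * (\<mu> * norm \<rho>)"
  proof -
    have "K * (1 - \<mu>) \<le> \<mu> * (1 - \<mu>)" using \<mu> by (intro mult_right_mono) auto
    then have "K \<le> (1 - \<mu> + K) * \<mu>" by (simp add: algebra_simps)
    then show ?thesis using mult_right_mono[of K "(1 - \<mu> + K) * \<mu>" "norm \<rho>"]
      by (simp add: mult.assoc)
  qed
  finally have "norm (r (Suc k)) \<le> \<mu> * norm \<rho>" using \<mu> K_pos by simp
  also have "\<dots> \<le> \<mu> * norm h"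
  proof -
    have "{Suc k - m (Suc k)..k} \<subseteq> {a..a + m k}" using depth_Suc(1)[OF nz] k by (auto simp: a_def)
    then have "norm \<rho> \<le> norm h" unfolding \<rho>_def by (rule is_LS_min_le_hull[OF LS _ h])
    then show ?thesis using \<mu>_nonneg by (rule mult_left_mono)
  qed
  finally show ?thesis .
qed

lemma run_step:
  assumes "\<forall>j\<le>k. r j \<noteq> 0" "run_invariant k"
  shows "x (Suc k) \<in> V \<inter> \<Sigma>" "norm (r (Suc k)) \<le> \<mu> * norm (r k)"
    "1 \<le> m (Suc k) \<Longrightarrow> h \<in> affine hull (r ` {Suc k - m (Suc k)..k}) \<Longrightarrow> norm (r (Suc k)) \<le> \<mu> * norm h"
  using plain_step[OF assms] accelerated_step(1)[OF assms] accelerated_contraction[OF assms]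
    accelerated_hull_decay[OF assms]
  by (cases "m k = 0"; auto)+

lemma hull_decay_Suc:
  assumes nz: "\<forall>j\<le>k. r j \<noteq> 0" and inv: "run_invariant k"
  shows "hull_decay (Suc k)"
  unfolding hull_decay_def
proof (intro allI impI ballI)
  fix j h
  assume j: "Suc k - m (Suc k) < j \<and> j \<le> Suc k"
    and h: "h \<in> affine hull (r ` {Suc k - m (Suc k)..j - 1})"
  show "norm (r j) \<le> \<mu> * norm h"
  proof (cases "j = Suc k")
    case True
    then show ?thesis using run_step(3)[OF assms] j h by simp
  next
    case False
    \<comment> \<open>the new window is contained in the old one extended by \<open>Suc k\<close>\<close>
    have "m (Suc k) \<le> m k + 1" using depth_Suc(1)[OF nz] .
    then have "k - m k < j \<and> j \<le> k"
      and "affine hull (r ` {Suc k - m (Suc k)..j - 1}) \<subseteq> affine hull (r ` {k - m k..j - 1})"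
      using j False by (auto intro!: hull_mono image_mono)
    then show ?thesis using inv h unfolding run_invariant_def hull_decay_def by blast
  qed
qed

lemma run_invariant_holds: "\<forall>j\<le>k. r j \<noteq> 0 \<Longrightarrow> run_invariant k"
proof (induction k)
  case 0
  have "x 0 \<in> V \<inter> \<Sigma>" using start(1) U_subset by blast
  then show ?case using near_xs_if_small_residual[of 0] start(1)
    by (simp add: run_invariant_def hull_decay_def depth_0)
next
  case (Suc k)
  have nz: "\<forall>j\<le>k. r j \<noteq> 0" using Suc.prems by simp
  note inv = Suc.IH[OF nz] and step = run_step[OF nz Suc.IH[OF nz]]
  have decreasing: "\<forall>j<Suc k. norm (r (Suc j)) \<le> \<mu> * norm (r j)"
    using inv step(2) less_Suc_eq unfolding run_invariant_def by auto
  then have "norm (r (Suc k)) \<le> norm (r 0)" using residual_antimono[of "Suc k" 0 "Suc k"] by simp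
  then have "x (Suc k) \<in> U \<inter> \<Sigma>" "norm (x (Suc k) - xs) \<le> norm (r (Suc k)) / \<sigma>"
    using near_xs_if_small_residual step(1) by blast+
  then show ?case
    using inv decreasing hull_decay_Suc[OF nz inv] le_Suc_eq unfolding run_invariant_def by auto
qed

lemma contraction_step: "r k \<noteq> 0 \<Longrightarrow> norm (r (Suc k)) \<le> \<mu> * norm (r k)"
  using run_step(2) run_invariant_holds nonzero_prefix by blast

lemma depth_restart_bound:
  "r k \<noteq> 0 \<Longrightarrow> 1 \<le> k - m k \<Longrightarrow> norm (r k) \<le> \<delta> * norm (r (k - m k - 1))"
proof (induction k)
  case (Suc k)
  have nz: "\<forall>j\<le>k. r j \<noteq> 0" using nonzero_prefix[OF Suc.prems(1)] by simp
  show ?case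
  proof (cases "m (Suc k) \<le> m k")
    case True
    then show ?thesis using depth_Suc(3)[OF nz True] by (simp add: Suc_diff_le)
  next
    case False
    \<comment> \<open>the window grew, so it starts where the previous one did\<close>
    then have same_start: "Suc k - m (Suc k) = k - m k" using depth_Suc(1)[OF nz] by simp
    have "norm (r (Suc k)) \<le> \<mu> * norm (r k)" using contraction_step nz by simp
    also have "\<dots> \<le> norm (r k)" using \<mu> \<mu>_nonneg by (intro mult_left_le_one_le) auto
    also have "\<dots> \<le> \<delta> * norm (r (k - m k - 1))" using Suc.IH nz Suc.prems(2) same_start by simp
    finally show ?thesis using same_start by simp
  qed
qed simp

lemma iterate_in_V: "x k \<in> V"
proof (cases "\<forall>j\<le>k. r j \<noteq> 0")
  case True
  then show ?thesis using run_invariant_holds U_subset unfolding run_invariant_def by blast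
next
  case False
  then obtain j0 where "r j0 = 0" "j0 \<le> k" by blast
  define j where "j = (LEAST j. r j = 0)"
  have j: "r j = 0" "j \<le> k"
    using LeastI[of "\<lambda>j. r j = 0", OF \<open>r j0 = 0\<close>] Least_le[of "\<lambda>j. r j = 0", OF \<open>r j0 = 0\<close>] \<open>j0 \<le> k\<close>
    unfolding j_def by auto
  obtain i where i: "j = Suc i" using j(1) start(2) by (cases j) auto
  have "\<forall>l\<le>i. r l \<noteq> 0" using not_less_Least[of _ "\<lambda>j. r j = 0"] i unfolding j_def
    by (simp add: le_imp_less_Suc)
  then have "x j \<in> V" using run_step(1)[OF _ run_invariant_holds] i by blast
  then show ?thesis using stopped[OF j] by simp
qed

lemma depth_le_DIM: "r k \<noteq> 0 \<Longrightarrow> m k \<le> min k DIM('b)"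
  using decreasing_window_le_DIM[OF \<mu>_nonneg \<mu>(2) depth_window(2)[OF _ run_invariant_holds]]
    depth_le[of k]
    nonzero_prefix[of k] by (cases "m k = 0") auto

lemma LS_unique:
  assumes "r k \<noteq> 0" "0 < m k" "is_LS_min r k (m k) d" "i \<le> m k"
  shows "d i = c k i"
proof -
  have nz: "\<forall>j\<le>k. r j \<noteq> 0" using nonzero_prefix[OF assms(1)] .
  have "k - m k + m k = k" using depth_le[of k] by simp
  then show ?thesis
    using decreasing_window_LS_unique[OF \<mu>_nonneg \<mu>(2)
        depth_window(2,1)[OF nz run_invariant_holds[OF nz] assms(2)]]
      assms(3,4) by simp
qed

lemma combination_in_V:
  assumes "r k \<noteq> 0" "vP" "0 < m k"
  shows "(\<Sum>i\<le>m k. c k i *\<^sub>R x (k - m k + i)) \<in> V"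
  using accelerated_step(3)[OF nonzero_prefix run_invariant_holds[OF nonzero_prefix] assms(3,2)]
    assms(1)
  by simp

lemma coeff_bound:
  assumes "r k \<noteq> 0" "i \<le> m k"
  shows "\<bar>c k i\<bar> \<le> 4 * 6 ^ m k * (1 + (\<mu> / (1 - \<mu>)) ^ m k)"
proof (cases "m k = 0")
  case True
  have "c k 0 = 1" using step_rule(1)[OF nonzero_prefix[OF assms(1)]] True by simp
  moreover have "0 \<le> (\<mu> / (1 - \<mu>)) ^ m k" using \<mu> \<mu>_nonneg by simp
  ultimately show ?thesis using True assms(2) by simp
next
  case False
  have nz: "\<forall>j\<le>k. r j \<noteq> 0" using nonzero_prefix[OF assms(1)] .
  have "\<bar>c k i\<bar> \<le> (\<Sum>i\<le>m k. \<bar>c k i\<bar>)" using assms(2) by (intro member_le_sum) auto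
  also have "\<dots> \<le> 2 * (2 * (3 / (1 - \<mu>)) ^ m k - 1)"
    using decreasing_window_LS_coeff_bound[OF \<mu>_nonneg \<mu>(2)
        depth_window(2,1)[OF nz run_invariant_holds[OF nz]]]
      False by simp
  also have "\<dots> \<le> coeff_sum_bound \<mu> (m k)" by (simp add: coeff_sum_bound_def)
  also have "\<dots> \<le> 4 * 6 ^ m k * (1 + (\<mu> / (1 - \<mu>)) ^ m k)"
    by (rule coeff_sum_bound_le[OF \<mu>_nonneg \<mu>(2)])
  finally show ?thesis .
qed

end

lemma (in anderson_setting) anderson_convergence:
  assumes "K < \<mu>" "\<mu> < 1"
  shows "\<exists>c\<mu>>0. \<forall>\<delta>. 0 < \<delta> \<and> \<delta> < K \<longrightarrow>
         (\<forall>vP x r m c.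
            (vP \<or> \<Sigma> = UNIV) \<and> x 0 \<in> U \<inter> \<Sigma> \<and> 0 < norm (r 0) \<and> norm (r 0) \<le> c\<mu> * \<delta>^2 \<and>
            AAP_run vP f g \<delta> x r m c
          \<longrightarrow>
            (\<forall>k. x k \<in> V) \<and>
            (\<forall>k. r k \<noteq> 0 \<longrightarrow>
               m k \<le> min k DIM('b) \<and>
               (0 < m k \<longrightarrow> (\<forall>d. is_LS_min r k (m k) d \<longrightarrow> (\<forall>i\<le>m k. d i = c k i))) \<and>
               (vP \<and> 0 < m k \<longrightarrow> (\<Sum>i\<le>m k. c k i *\<^sub>R x (k - m k + i)) \<in> V) \<and>
               (\<forall>i\<le>m k. \<bar>c k i\<bar> \<le> 4 * 6 ^ m k * (1 + (\<mu> / (1 - \<mu>)) ^ m k)) \<and>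
               norm (r (Suc k)) \<le> \<mu> * norm (r k) \<and>
               (1 \<le> k - m k \<longrightarrow> norm (r k) \<le> \<delta> * norm (r (k - m k - 1)))))"
proof -
  obtain c\<mu> where c\<mu>: "admissible_radius \<mu> c\<mu>" using admissible_radius_exists[OF assms(1)] by blast
  then have "0 < c\<mu>" unfolding admissible_radius_def by simp
  then show ?thesis
    apply (intro exI[of _ c\<mu>] conjI[OF \<open>0 < c\<mu>\<close>] allI impI)
    subgoal premises run for \<delta> vP x r m c
    proof -
      interpret anderson_run \<Sigma> V U f g xs K \<sigma> L L' M \<rho>0 \<mu> \<delta> c\<mu> vP x r m c
        using run assms c\<mu> by unfold_locales auto
      show ?thesis
        using iterate_in_V depth_le_DIM LS_unique combination_in_V coeff_bound contraction_step
          depth_restart_bound by auto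
    qed
    done
qed

theorem theorem3p2:
  shows "\<exists>C::nat \<Rightarrow> real. (\<forall>mm. 0 < C mm) \<and>
   (\<forall>(\<Sigma>::(real^'n) set) (V::(real^'n) set) (f::real^'n \<Rightarrow> real^'p) (g::real^'n \<Rightarrow> real^'n)
      xs K \<sigma> U L L' M.
     is_smooth_submanifold \<Sigma> \<and> open V \<and> C_k_on 2 V f \<and> C_k_on 2 V g \<and> g ` V \<subseteq> \<Sigma> \<and>
     xs \<in> V \<inter> \<Sigma> \<and> g xs = xs \<and> f xs = 0 \<and>
     0 < K \<and> K < 1 \<and> (\<forall>x \<in> V \<inter> g -` V \<inter> \<Sigma>. norm (f (g x)) \<le> K * norm (f x)) \<and>
     0 < \<sigma> \<and> (\<forall>x \<in> V \<inter> \<Sigma>. \<sigma> * norm (x - xs) \<le> norm (f x)) \<and>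
     open U \<and> xs \<in> U \<and> U \<subseteq> V \<inter> g -` V \<and>
     (\<forall>x\<in>U. \<forall>y\<in>U.
        norm (f x - f y) \<le> 2 * onorm (frechet_derivative f (at xs)) * norm (x - y) \<and>
        norm (f (g x) - f (g y)) \<le>
          2 * onorm (frechet_derivative f (at xs) \<circ> frechet_derivative g (at xs)) * norm (x - y)) \<and>
     0 < L \<and> 0 < L' \<and>
     (\<forall>x\<in>U. norm (f x - frechet_derivative f (at xs) (x - xs)) \<le> L / 2 * norm (x - xs)^2 \<and>
             norm (g x - xs - frechet_derivative g (at xs) (x - xs)) \<le> L' / 2 * norm (x - xs)^2) \<and>
     (\<forall>x\<in>U. (\<exists>!y. y \<in> \<Sigma> \<and> (\<forall>z\<in>\<Sigma>. dist x y \<le> dist x z)) \<and> closest_point \<Sigma> x \<in> U) \<and>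
     smooth_on U (closest_point \<Sigma>) \<and>
     0 < M \<and>
     (\<forall>x\<in>U. norm (closest_point \<Sigma> x - (xs + closest_point (tangent_space \<Sigma> xs) (x - xs)))
               \<le> M / 2 * norm (x - xs)^2)
   \<longrightarrow>
     (\<forall>\<mu>. K < \<mu> \<and> \<mu> < 1 \<longrightarrow>
       (\<exists>c\<mu>>0. \<forall>\<delta>. 0 < \<delta> \<and> \<delta> < K \<longrightarrow>
         (\<forall>vP x r m c.
            (vP \<or> \<Sigma> = UNIV) \<and> x 0 \<in> U \<inter> \<Sigma> \<and> 0 < norm (r 0) \<and> norm (r 0) \<le> c\<mu> * \<delta>^2 \<and>
            AAP_run vP f g \<delta> x r m c
          \<longrightarrow>
            (\<forall>k. x k \<in> V) \<and>
            (\<forall>k. r k \<noteq> 0 \<longrightarrow>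
               m k \<le> min k CARD('p) \<and>
               (0 < m k \<longrightarrow> (\<forall>d. is_LS_min r k (m k) d \<longrightarrow> (\<forall>i\<le>m k. d i = c k i))) \<and>
               (vP \<and> 0 < m k \<longrightarrow> (\<Sum>i\<le>m k. c k i *\<^sub>R x (k - m k + i)) \<in> V) \<and>
               (\<forall>i\<le>m k. \<bar>c k i\<bar> \<le> C (m k) * (1 + (\<mu> / (1 - \<mu>)) ^ m k)) \<and>
               norm (r (Suc k)) \<le> \<mu> * norm (r k) \<and>
               (1 \<le> k - m k \<longrightarrow> norm (r k) \<le> \<delta> * norm (r (k - m k - 1))))))))"
  apply (intro exI[of _ "\<lambda>m. 4 * 6 ^ m"] conjI allI impI)
   apply simp
  subgoal premises H for \<Sigma> V f g xs K \<sigma> U L L' M \<mu>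
  proof -
    obtain \<rho>0 where \<rho>0: "0 < \<rho>0" "ball xs \<rho>0 \<subseteq> U" using H openE by meson
    have "f differentiable (at xs)" "g differentiable (at xs)"
      using H C_k_on_differentiable[of 2 V] by auto
    moreover have "subspace (tangent_space \<Sigma> xs)" using H tangent_space_subspace by blast
    ultimately interpret anderson_setting \<Sigma> V U f g xs K \<sigma> L L' M \<rho>0
      using H \<rho>0 by unfold_locales auto
    show ?thesis using anderson_convergence H by simp
  qed
  done

end
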